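(* Any element $z\in RF(m)$ can be written in the form $$z=\prod_{i=1}^m x_i^{\alpha_i}\prod_{1\le i\le j\le m}[x_j,x_i]^{\beta_{i,j}}\prod_{i=1}^{m-1}\prod_{j=1}^{m-1}[[\omega_{i,j},x_i],x_j]$$ with $\alpha_i,\beta_{i,j}\in\mathbb Z$ and $\omega_{i,j}\in RF(m)$ (products taken in increasing order of the indices, lexicographically for pairs).
   Context: $RF(m)$ is the reduced free group on $x_1,\dots,x_m$: the quotient of the free group by the relations that each $x_i$ commutes with every conjugate of itself. Commutators are $[g,h]=g^{-1}h^{-1}gh$. *)

theory Defs
  imports "HOL-Algebra.Group"
begin

text \<open>Concrete construction of the reduced free group RF(m) as a quotient of
  the free monoid on letters x_i^{+1}, x_i^{-1} (i < m; generators 0-indexed).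
  A letter (i, False) stands for x_i, (i, True) for its inverse.\<close>

type_synonym letter = "nat \<times> bool"

definition alph :: "nat \<Rightarrow> letter set" where
  "alph m = {(i, b). i < m}"

definition inv_word :: "letter list \<Rightarrow> letter list" where
  "inv_word w = rev (map (\<lambda>(i, b). (i, \<not> b)) w)"

definition comm_word :: "letter list \<Rightarrow> letter list \<Rightarrow> letter list" where
  "comm_word u v = inv_word u @ inv_word v @ u @ v"

text \<open>The congruence on words defining RF(m): free cancellation, and the
  relators [x_i, g^{-1} x_i g] for every word g (x_i commutes with each
  of its conjugates).\<close>
inductive rf_rel :: "nat \<Rightarrow> letter list \<Rightarrow> letter list \<Rightarrow> bool" for m where
  rf_refl: "rf_rel m w w"
| rf_sym: "rf_rel m w w' \<Longrightarrow> rf_rel m w' w"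
| rf_trans: "rf_rel m u v \<Longrightarrow> rf_rel m v w \<Longrightarrow> rf_rel m u w"
| rf_cancel: "set u \<subseteq> alph m \<Longrightarrow> set v \<subseteq> alph m \<Longrightarrow> i < m \<Longrightarrow>
    rf_rel m (u @ [(i, b), (i, \<not> b)] @ v) (u @ v)"
| rf_relator: "set u \<subseteq> alph m \<Longrightarrow> set v \<subseteq> alph m \<Longrightarrow> set g \<subseteq> alph m \<Longrightarrow> i < m \<Longrightarrow>
    rf_rel m (u @ comm_word [(i, False)] (inv_word g @ [(i, False)] @ g) @ v) (u @ v)"

definition rf_class :: "nat \<Rightarrow> letter list \<Rightarrow> letter list set" where
  "rf_class m w = {w'. rf_rel m w w'}"

definition rf_rep :: "letter list set \<Rightarrow> letter list" where
  "rf_rep A = (SOME w. w \<in> A)"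

definition RF :: "nat \<Rightarrow> letter list set monoid" where
  "RF m = \<lparr> carrier = {rf_class m w | w. set w \<subseteq> alph m},
            mult = (\<lambda>A B. rf_class m (rf_rep A @ rf_rep B)),
            one = rf_class m [] \<rparr>"

definition rf_gen :: "nat \<Rightarrow> nat \<Rightarrow> letter list set" where
  "rf_gen m i = rf_class m [(i, False)]"

definition gcomm :: "('a, 'b) monoid_scheme \<Rightarrow> 'a \<Rightarrow> 'a \<Rightarrow> 'a" where
  "gcomm G g h = inv\<^bsub>G\<^esub> g \<otimes>\<^bsub>G\<^esub> (inv\<^bsub>G\<^esub> h \<otimes>\<^bsub>G\<^esub> (g \<otimes>\<^bsub>G\<^esub> h))"

definition oprod :: "('a, 'b) monoid_scheme \<Rightarrow> ('c \<Rightarrow> 'a) \<Rightarrow> 'c list \<Rightarrow> 'a" where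
  "oprod G f xs = foldr (\<lambda>a acc. f a \<otimes>\<^bsub>G\<^esub> acc) xs \<one>\<^bsub>G\<^esub>"

end

theory Submission
  imports Defs "HOL-Algebra.Generated_Groups"
begin

text \<open>
  Induct on the number of generators. Let \<open>G\<close> be generated by \<open>x\<^sub>0, ..., x\<^sub>n\<close>, each commuting
  with all of its conjugates. The normal closure \<open>N\<close> of \<open>x\<^sub>n\<close> is generated by pairwise commuting
  conjugates of \<open>x\<^sub>n\<close>, hence abelian, and \<open>G = H N\<close> with \<open>H\<close> generated by the first \<open>n\<close>
  generators. Filter \<open>N\<close> by the subgroups \<open>V\<^sub>d\<close> (\<open>level d\<close>) generated by the iterated
  commutators \<open>[v, x\<^sub>k\<^sub>1, ..., x\<^sub>k\<^sub>d]\<close> with \<open>v \<in> N\<close> and all \<open>k\<^sub>i < n\<close>: they are normalised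
  by \<open>G\<close>, \<open>[V\<^sub>d, G] \<subseteq> V\<^sub>d\<^sub>+\<^sub>1\<close>, and \<open>V\<^sub>n\<^sub>+\<^sub>1 = 1\<close> because an iterated commutator with a repeated
  index is trivial. Modulo \<open>V\<^sub>1\<close> an element of \<open>N\<close> is a power of \<open>x\<^sub>n\<close>, modulo \<open>V\<^sub>2\<close> an element
  of \<open>V\<^sub>1\<close> is a product of powers of the \<open>[x\<^sub>n, x\<^sub>i]\<close>, and \<open>V\<^sub>d\<^sub>+\<^sub>2\<close> consists exactly of the
  products of double commutators \<open>[[\<nu>\<^sub>i\<^sub>j, x\<^sub>i], x\<^sub>j]\<close> with \<open>\<nu>\<^sub>i\<^sub>j \<in> V\<^sub>d\<close>. So, starting from the
  normal form of the \<open>H\<close>-part, the new powers of \<open>x\<^sub>n\<close> and of the \<open>[x\<^sub>n, x\<^sub>i]\<close> can be moved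
  into position at the cost of an error in \<open>V\<^sub>2\<close>; absorbing such an error into the product of
  double commutators leaves an error one level deeper, until it vanishes.
\<close>

section \<open>Commutator calculus\<close>

definition gconj :: "('a, 'b) monoid_scheme \<Rightarrow> 'a \<Rightarrow> 'a \<Rightarrow> 'a" where
  "gconj G g a = inv\<^bsub>G\<^esub> g \<otimes>\<^bsub>G\<^esub> a \<otimes>\<^bsub>G\<^esub> g"

context group
begin

lemma mult_inv_cancel_left [simp]: "x \<in> carrier G \<Longrightarrow> z \<in> carrier G \<Longrightarrow> x \<otimes> (inv x \<otimes> z) = z"
  by (simp add: m_assoc[symmetric])

lemma inv_mult_cancel_left [simp]: "x \<in> carrier G \<Longrightarrow> z \<in> carrier G \<Longrightarrow> inv x \<otimes> (x \<otimes> z) = z"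
  by (simp add: m_assoc[symmetric])

lemma gcomm_closed [simp]: "a \<in> carrier G \<Longrightarrow> b \<in> carrier G \<Longrightarrow> gcomm G a b \<in> carrier G"
  by (simp add: gcomm_def)

lemma gconj_closed [simp]: "g \<in> carrier G \<Longrightarrow> a \<in> carrier G \<Longrightarrow> gconj G g a \<in> carrier G"
  by (simp add: gconj_def)

lemma gconj_eq_mult_gcomm: "g \<in> carrier G \<Longrightarrow> a \<in> carrier G \<Longrightarrow> gconj G g a = a \<otimes> gcomm G a g"
  by (simp add: gconj_def gcomm_def m_assoc)

lemma gcomm_eq_inv_mult_gconj: "a \<in> carrier G \<Longrightarrow> g \<in> carrier G \<Longrightarrow> gcomm G a g = inv a \<otimes> gconj G g a"
  by (simp add: gconj_def gcomm_def m_assoc)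

lemma m_swap_gcomm: "a \<in> carrier G \<Longrightarrow> b \<in> carrier G \<Longrightarrow> a \<otimes> b = b \<otimes> a \<otimes> gcomm G a b"
  by (simp add: gcomm_def m_assoc)

lemma gcomm_mult_left: "a \<in> carrier G \<Longrightarrow> b \<in> carrier G \<Longrightarrow> c \<in> carrier G \<Longrightarrow>
    gcomm G (a \<otimes> b) c = gconj G b (gcomm G a c) \<otimes> gcomm G b c"
  by (simp add: gconj_def gcomm_def m_assoc inv_mult_group)

lemma gcomm_mult_right: "a \<in> carrier G \<Longrightarrow> b \<in> carrier G \<Longrightarrow> c \<in> carrier G \<Longrightarrow>
    gcomm G a (b \<otimes> c) = gcomm G a c \<otimes> gconj G c (gcomm G a b)"
  by (simp add: gconj_def gcomm_def m_assoc inv_mult_group)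

lemma inv_gcomm: "a \<in> carrier G \<Longrightarrow> b \<in> carrier G \<Longrightarrow> inv (gcomm G a b) = gcomm G b a"
  by (simp add: gcomm_def m_assoc inv_mult_group)

lemma gconj_mult_conjugator:
  "g \<in> carrier G \<Longrightarrow> h \<in> carrier G \<Longrightarrow> a \<in> carrier G \<Longrightarrow> gconj G (g \<otimes> h) a = gconj G h (gconj G g a)"
  by (simp add: gconj_def m_assoc inv_mult_group)

lemma gconj_mult:
  "g \<in> carrier G \<Longrightarrow> a \<in> carrier G \<Longrightarrow> b \<in> carrier G \<Longrightarrow> gconj G g (a \<otimes> b) = gconj G g a \<otimes> gconj G g b"
  by (simp add: gconj_def m_assoc)

lemma gconj_inv: "g \<in> carrier G \<Longrightarrow> a \<in> carrier G \<Longrightarrow> gconj G g (inv a) = inv (gconj G g a)"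
  by (simp add: gconj_def m_assoc inv_mult_group)

lemma gconj_one_conjugator [simp]: "a \<in> carrier G \<Longrightarrow> gconj G \<one> a = a"
  by (simp add: gconj_def)

lemma gconj_one [simp]: "g \<in> carrier G \<Longrightarrow> gconj G g \<one> = \<one>"
  by (simp add: gconj_def)

lemma gcomm_one_right [simp]: "a \<in> carrier G \<Longrightarrow> gcomm G a \<one> = \<one>"
  by (simp add: gcomm_def)

lemma gcomm_one_left [simp]: "a \<in> carrier G \<Longrightarrow> gcomm G \<one> a = \<one>"
  by (simp add: gcomm_def)

lemma gcomm_self [simp]: "a \<in> carrier G \<Longrightarrow> gcomm G a a = \<one>"
  by (simp add: gcomm_def)

lemma gcomm_eq_one_iff:
  assumes "a \<in> carrier G" "b \<in> carrier G"
  shows "gcomm G a b = \<one> \<longleftrightarrow> a \<otimes> b = b \<otimes> a"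
proof
  assume "gcomm G a b = \<one>"
  then show "a \<otimes> b = b \<otimes> a" using m_swap_gcomm[OF assms] assms by simp
next
  assume "a \<otimes> b = b \<otimes> a"
  then show "gcomm G a b = \<one>" using assms by (simp add: gcomm_def m_assoc[symmetric])
qed

lemma gconj_eq_self_iff:
  "g \<in> carrier G \<Longrightarrow> a \<in> carrier G \<Longrightarrow> gconj G g a = a \<longleftrightarrow> a \<otimes> g = g \<otimes> a"
  by (simp add: gconj_eq_mult_gcomm gcomm_eq_one_iff)

lemma commute_inv:
  "a \<in> carrier G \<Longrightarrow> h \<in> carrier G \<Longrightarrow> a \<otimes> h = h \<otimes> a \<Longrightarrow> a \<otimes> inv h = inv h \<otimes> a"
  by (metis inv_closed inv_solve_left' inv_solve_right m_assoc m_closed)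

lemma commute_generate:
  assumes "H \<subseteq> carrier G" "a \<in> carrier G" "\<And>h. h \<in> H \<Longrightarrow> a \<otimes> h = h \<otimes> a"
    and "g \<in> generate G H"
  shows "a \<otimes> g = g \<otimes> a"
  using assms(4)
proof (induct rule: generate.induct)
  case (inv h)
  then show ?case using assms commute_inv by auto
next
  case (eng h1 h2)
  then have "h1 \<in> carrier G" "h2 \<in> carrier G" using generate_in_carrier assms(1) by auto
  then show ?case using eng assms(2) by (metis m_assoc)
qed (use assms in simp_all)

lemma gcomm_mult_left_commute:
  assumes "a \<in> carrier G" "b \<in> carrier G" "c \<in> carrier G"
    and "gcomm G a c \<otimes> b = b \<otimes> gcomm G a c"
  shows "gcomm G (a \<otimes> b) c = gcomm G a c \<otimes> gcomm G b c"
  using assms by (simp add: gcomm_mult_left gconj_eq_self_iff)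

lemma gconj_hom: "g \<in> carrier G \<Longrightarrow> gconj G g \<in> hom G G"
  by (intro homI) (simp_all add: gconj_mult)

lemma gcomm_int_pow_left:
  assumes a: "a \<in> carrier G" and c: "c \<in> carrier G"
    and comm: "a \<otimes> gcomm G a c = gcomm G a c \<otimes> a"
  shows "gcomm G (a [^] (n::int)) c = gcomm G a c [^] n"
proof -
  have "gconj G c (a [^] n) = (a \<otimes> gcomm G a c) [^] n"
    using hom_int_pow[OF gconj_hom[OF c] a is_group is_group] a c by (simp add: gconj_eq_mult_gcomm)
  also have "\<dots> = a [^] n \<otimes> gcomm G a c [^] n"
    by (rule int_pow_mult_distrib[OF comm a gcomm_closed[OF a c]])
  finally show ?thesis using a c by (simp add: gcomm_eq_inv_mult_gconj)
qed

lemma gcomm_inv_right: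
  assumes v: "v \<in> carrier G" and y: "y \<in> carrier G"
    and comm: "gcomm G v y \<otimes> y = y \<otimes> gcomm G v y"
  shows "gcomm G v (inv y) = inv (gcomm G v y)"
proof -
  let ?c = "gcomm G v y"
  have "?c \<otimes> inv y = inv y \<otimes> ?c" using commute_inv[OF _ y comm] v y by simp
  then have "gconj G (inv y) (gconj G y v) = gconj G (inv y) (v \<otimes> ?c)"
    using v y by (simp add: gconj_eq_mult_gcomm)
  also have "\<dots> = gconj G (inv y) v \<otimes> ?c"
    using v y \<open>?c \<otimes> inv y = inv y \<otimes> ?c\<close> by (simp add: gconj_mult gconj_eq_self_iff)
  finally have "v = gconj G (inv y) v \<otimes> ?c"
    using v y by (simp add: gconj_mult_conjugator[symmetric])
  then have "gconj G (inv y) v = v \<otimes> inv ?c"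
    using v y by (metis gcomm_closed gconj_closed inv_closed inv_solve_right)
  then show ?thesis using v y by (simp add: gcomm_eq_inv_mult_gconj m_assoc[symmetric])
qed

end

section \<open>Ordered products and normal forms\<close>

context group
begin

lemma oprod_Nil [simp]: "oprod G f [] = \<one>"
  by (simp add: oprod_def)

lemma oprod_Cons [simp]: "oprod G f (a # xs) = f a \<otimes> oprod G f xs"
  by (simp add: oprod_def)

lemma oprod_map: "oprod G f (map h xs) = oprod G (\<lambda>q. f (h q)) xs"
  by (induct xs) auto

lemma oprod_cong: "(\<And>q. q \<in> set xs \<Longrightarrow> f q = g q) \<Longrightarrow> oprod G f xs = oprod G g xs"
  by (induct xs) auto

lemma oprod_eq_one: "(\<And>q. q \<in> set xs \<Longrightarrow> f q = \<one>) \<Longrightarrow> oprod G f xs = \<one>"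
  by (induct xs) auto

lemma oprod_in_subgroup:
  assumes "subgroup H G" "\<And>q. q \<in> set xs \<Longrightarrow> f q \<in> H"
  shows "oprod G f xs \<in> H"
  using assms(2) by (induct xs) (simp_all add: subgroup.one_closed[OF assms(1)] subgroup.m_closed[OF assms(1)])

lemma oprod_closed: "(\<And>q. q \<in> set xs \<Longrightarrow> f q \<in> carrier G) \<Longrightarrow> oprod G f xs \<in> carrier G"
  by (rule oprod_in_subgroup[OF subgroup_self])

lemma oprod_append:
  "(\<And>q. q \<in> set (xs @ ys) \<Longrightarrow> f q \<in> carrier G) \<Longrightarrow>
    oprod G f (xs @ ys) = oprod G f xs \<otimes> oprod G f ys"
proof (induct xs)
  case (Cons a xs)
  then have "f a \<in> carrier G" "oprod G f xs \<in> carrier G" "oprod G f ys \<in> carrier G"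
    by (auto intro!: oprod_closed)
  then show ?case using Cons by (simp add: m_assoc)
qed (simp add: oprod_closed)

lemma oprod_filter:
  assumes "\<And>q. q \<in> set xs \<Longrightarrow> f q \<in> carrier G" "\<And>q. q \<in> set xs \<Longrightarrow> \<not> P q \<Longrightarrow> f q = \<one>"
  shows "oprod G f xs = oprod G f (filter P xs)"
  using assms
proof (induct xs)
  case (Cons a xs)
  have "oprod G f (filter P xs) \<in> carrier G" using Cons(2) by (intro oprod_closed) auto
  then show ?case using Cons by auto
qed simp

lemma oprod_eq_single:
  assumes "distinct xs" "p \<in> set xs" "\<And>q. q \<in> set xs \<Longrightarrow> q \<noteq> p \<Longrightarrow> f q = \<one>"
    "f p \<in> carrier G"
  shows "oprod G f xs = f p"
proof -
  have "oprod G f xs = oprod G f (filter (\<lambda>q. q = p) xs)"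
    using assms by (intro oprod_filter) (metis one_closed)+
  moreover have "filter (\<lambda>q. q = p) xs = [p]"
    using assms(1,2) by (induct xs) (auto simp: filter_empty_conv)
  ultimately show ?thesis using assms by simp
qed

lemma oprod_mult_distrib_commute:
  assumes H: "subgroup H G" and comm: "\<And>a b. a \<in> H \<Longrightarrow> b \<in> H \<Longrightarrow> a \<otimes> b = b \<otimes> a"
    and fg: "\<And>q. q \<in> set xs \<Longrightarrow> f q \<in> H \<and> g q \<in> H"
  shows "oprod G (\<lambda>q. f q \<otimes> g q) xs = oprod G f xs \<otimes> oprod G g xs"
  using fg
proof (induct xs)
  case (Cons a xs)
  have fa: "f a \<in> H" and ga: "g a \<in> H" using Cons(2) by auto
  have F: "oprod G f xs \<in> H" "oprod G g xs \<in> H"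
    using Cons(2) by (auto intro!: oprod_in_subgroup[OF H])
  note carr = subgroup.mem_carrier[OF H]
  have "oprod G (\<lambda>q. f q \<otimes> g q) (a # xs) = f a \<otimes> (g a \<otimes> oprod G f xs) \<otimes> oprod G g xs"
    using Cons fa ga F by (simp add: carr m_assoc)
  also have "g a \<otimes> oprod G f xs = oprod G f xs \<otimes> g a" using comm ga F by simp
  finally show ?case using fa ga F by (simp add: carr m_assoc)
qed simp

end

lemma distinct_pairs: "distinct xs \<Longrightarrow> distinct ys \<Longrightarrow> distinct [(i, j). i \<leftarrow> xs, j \<leftarrow> ys]"
  by (simp add: product_concat_map[symmetric] distinct_product)

lemma filter_upper_pairs_neq:
  "filter (\<lambda>(i, j). j \<noteq> n) [(i, j). i \<leftarrow> [0..<Suc n], j \<leftarrow> [i..<Suc n]]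
    = [(i, j). i \<leftarrow> [0..<n], j \<leftarrow> [i..<n]]"
proof -
  have "filter (\<lambda>(i, j). j \<noteq> n) [(i, j). i \<leftarrow> xs, j \<leftarrow> [i..<Suc n]] = [(i, j). i \<leftarrow> xs, j \<leftarrow> [i..<n]]"
    if "\<forall>i \<in> set xs. i \<le> n" for xs
    using that by (induct xs) (auto simp: filter_map o_def)
  then show ?thesis by simp
qed

lemma filter_upper_pairs_eq:
  "filter (\<lambda>(i, j). j = n) [(i, j). i \<leftarrow> [0..<Suc n], j \<leftarrow> [i..<Suc n]] = map (\<lambda>i. (i, n)) [0..<Suc n]"
proof -
  have "filter (\<lambda>(i, j). j = n) [(i, j). i \<leftarrow> xs, j \<leftarrow> [i..<Suc n]] = map (\<lambda>i. (i, n)) xs"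
    if "\<forall>i \<in> set xs. i \<le> n" for xs
    using that by (induct xs) (auto simp: filter_map o_def)
  then show ?thesis by (simp add: less_Suc_eq_le)
qed

lemma filter_square_pairs:
  assumes "k \<le> n"
  shows "filter (\<lambda>(i, j). i < k \<and> j < k) [(i, j). i \<leftarrow> [0..<n], j \<leftarrow> [0..<n]]
    = [(i, j). i \<leftarrow> [0..<k], j \<leftarrow> [0..<k]]"
proof -
  have "filter (\<lambda>j. j < k) [0..<k + d] = [0..<k]" for d
    by (induct d) (auto simp: filter_id_conv)
  then have lt: "filter (\<lambda>j. j < k) [0..<n] = [0..<k]" using assms by (metis le_add_diff_inverse)
  have "filter (\<lambda>(i, j). i < k \<and> j < k) [(i, j). i \<leftarrow> xs, j \<leftarrow> ys]
      = [(i, j). i \<leftarrow> filter (\<lambda>i. i < k) xs, j \<leftarrow> filter (\<lambda>j. j < k) ys]" for xs ys :: "nat list"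
    by (induct xs) (auto simp: filter_map o_def)
  then show ?thesis by (simp add: lt)
qed

definition pow_prod :: "('a, 'b) monoid_scheme \<Rightarrow> (nat \<Rightarrow> 'a) \<Rightarrow> (nat \<Rightarrow> int) \<Rightarrow> nat \<Rightarrow> 'a" where
  "pow_prod G x \<alpha> n = oprod G (\<lambda>i. x i [^]\<^bsub>G\<^esub> \<alpha> i) [0..<n]"

definition comm_prod :: "('a, 'b) monoid_scheme \<Rightarrow> (nat \<Rightarrow> 'a) \<Rightarrow> (nat \<Rightarrow> nat \<Rightarrow> int) \<Rightarrow> nat \<Rightarrow> 'a" where
  "comm_prod G x \<beta> n =
    oprod G (\<lambda>(i, j). gcomm G (x j) (x i) [^]\<^bsub>G\<^esub> \<beta> i j) [(i, j). i \<leftarrow> [0..<n], j \<leftarrow> [i..<n]]"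

definition comm3_prod :: "('a, 'b) monoid_scheme \<Rightarrow> (nat \<Rightarrow> 'a) \<Rightarrow> (nat \<Rightarrow> nat \<Rightarrow> 'a) \<Rightarrow> nat \<Rightarrow> 'a" where
  "comm3_prod G x \<omega> n =
    oprod G (\<lambda>(i, j). gcomm G (gcomm G (\<omega> i j) (x i)) (x j)) [(i, j). i \<leftarrow> [0..<n - 1], j \<leftarrow> [0..<n - 1]]"

definition has_normal_form :: "('a, 'b) monoid_scheme \<Rightarrow> (nat \<Rightarrow> 'a) \<Rightarrow> nat \<Rightarrow> 'a \<Rightarrow> bool" where
  "has_normal_form G x n z \<longleftrightarrow> (\<exists>\<alpha> \<beta> \<omega>. (\<forall>i j. \<omega> i j \<in> generate G (x ` {..<n})) \<and>
     z = pow_prod G x \<alpha> n \<otimes>\<^bsub>G\<^esub> (comm_prod G x \<beta> n \<otimes>\<^bsub>G\<^esub> comm3_prod G x \<omega> n))"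

lemma (in group) pow_prod_Suc:
  assumes "\<And>i. i \<le> n \<Longrightarrow> x i \<in> carrier G"
  shows "pow_prod G x \<alpha> (Suc n) = pow_prod G x \<alpha> n \<otimes> x n [^] \<alpha> n"
proof -
  have "oprod G (\<lambda>i. x i [^] \<alpha> i) ([0..<n] @ [n])
      = oprod G (\<lambda>i. x i [^] \<alpha> i) [0..<n] \<otimes> oprod G (\<lambda>i. x i [^] \<alpha> i) [n]"
    by (rule oprod_append) (auto intro!: int_pow_closed assms)
  then show ?thesis using assms by (simp add: pow_prod_def)
qed

section \<open>The reduced free group\<close>

lemma alph_iff [simp]: "c \<in> alph m \<longleftrightarrow> fst c < m"
  by (cases c) (auto simp: alph_def)

lemma inv_word_alph_iff [simp]: "set (inv_word w) \<subseteq> alph m \<longleftrightarrow> set w \<subseteq> alph m"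
  by (auto simp: inv_word_def)

lemma inv_word_append [simp]: "inv_word (u @ v) = inv_word v @ inv_word u"
  by (simp add: inv_word_def)

lemma rf_rel_alph_iff: "rf_rel m w w' \<Longrightarrow> set w \<subseteq> alph m \<longleftrightarrow> set w' \<subseteq> alph m"
  by (induct rule: rf_rel.induct) (auto simp: comm_word_def)

lemma rf_rel_append_cong:
  assumes "rf_rel m u v" "set u \<subseteq> alph m" "set p \<subseteq> alph m" "set s \<subseteq> alph m"
  shows "rf_rel m (p @ u @ s) (p @ v @ s)"
  using assms
proof (induct rule: rf_rel.induct)
  case (rf_refl w)
  show ?case by (rule rf_rel.rf_refl)
next
  case (rf_sym w w')
  then show ?case using rf_rel_alph_iff[OF rf_sym(1)] by (auto intro: rf_rel.rf_sym)
next
  case (rf_trans u v w)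
  then show ?case using rf_rel_alph_iff[OF rf_trans(1)] by (auto intro: rf_rel.rf_trans)
next
  case (rf_cancel u v i b)
  have "rf_rel m ((p @ u) @ [(i, b), (i, \<not> b)] @ (v @ s)) ((p @ u) @ (v @ s))"
    by (rule rf_rel.rf_cancel) (use rf_cancel in auto)
  then show ?case by simp
next
  case (rf_relator u v g i)
  have "rf_rel m ((p @ u) @ comm_word [(i, False)] (inv_word g @ [(i, False)] @ g) @ (v @ s))
      ((p @ u) @ (v @ s))"
    by (rule rf_rel.rf_relator) (use rf_relator in auto)
  then show ?case by simp
qed

lemma rf_class_eq: "rf_rel m a b \<Longrightarrow> rf_class m a = rf_class m b"
  unfolding rf_class_def by (auto intro: rf_rel.rf_trans rf_rel.rf_sym)

lemma rf_rel_rf_rep: "rf_rel m (rf_rep (rf_class m a)) a"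
proof -
  have "a \<in> rf_class m a" by (simp add: rf_class_def rf_rel.rf_refl)
  then have "rf_rep (rf_class m a) \<in> rf_class m a" unfolding rf_rep_def by (rule someI)
  then show ?thesis by (simp add: rf_class_def rf_rel.rf_sym)
qed

lemma RF_carrier: "carrier (RF m) = {rf_class m w | w. set w \<subseteq> alph m}"
  by (simp add: RF_def)

lemma RF_one: "\<one>\<^bsub>RF m\<^esub> = rf_class m []"
  by (simp add: RF_def)

lemma RF_mult_rf_class:
  assumes "set a \<subseteq> alph m" "set b \<subseteq> alph m"
  shows "rf_class m a \<otimes>\<^bsub>RF m\<^esub> rf_class m b = rf_class m (a @ b)"
proof -
  let ?A = "rf_rep (rf_class m a)" and ?B = "rf_rep (rf_class m b)"
  have A: "rf_rel m ?A a" and B: "rf_rel m ?B b" by (rule rf_rel_rf_rep)+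
  have "set ?A \<subseteq> alph m" "set ?B \<subseteq> alph m"
    using rf_rel_alph_iff[OF A] rf_rel_alph_iff[OF B] assms by simp_all
  then have "rf_rel m ([] @ ?A @ ?B) ([] @ a @ ?B)" "rf_rel m (a @ ?B @ []) (a @ b @ [])"
    using assms by (intro rf_rel_append_cong A B; simp)+
  then have "rf_rel m (?A @ ?B) (a @ b)" by (auto intro: rf_rel.rf_trans)
  then show ?thesis by (simp add: RF_def rf_class_eq)
qed

lemma rf_rel_inv_word_append: "set a \<subseteq> alph m \<Longrightarrow> rf_rel m (inv_word a @ a) []"
proof (induct a)
  case Nil
  then show ?case by (simp add: inv_word_def rf_rel.rf_refl)
next
  case (Cons c a)
  obtain i b where c: "c = (i, b)" by (cases c)
  have "rf_rel m (inv_word a @ [(i, \<not> b), (i, \<not> \<not> b)] @ a) (inv_word a @ a)"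
    by (rule rf_rel.rf_cancel) (use Cons c in auto)
  then have "rf_rel m (inv_word (c # a) @ c # a) (inv_word a @ a)"
    using c by (simp add: inv_word_def)
  then show ?case using Cons by (auto intro: rf_rel.rf_trans)
qed

lemma group_RF: "group (RF m)"
proof (rule groupI)
  fix x y assume "x \<in> carrier (RF m)" "y \<in> carrier (RF m)"
  then obtain a b where "x = rf_class m a" "set a \<subseteq> alph m" "y = rf_class m b" "set b \<subseteq> alph m"
    by (auto simp: RF_carrier)
  then show "x \<otimes>\<^bsub>RF m\<^esub> y \<in> carrier (RF m)"
    unfolding RF_carrier by (intro CollectI exI[of _ "a @ b"]) (auto simp: RF_mult_rf_class)
next
  show "\<one>\<^bsub>RF m\<^esub> \<in> carrier (RF m)" by (auto simp: RF_carrier RF_one)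
next
  fix x y z assume "x \<in> carrier (RF m)" "y \<in> carrier (RF m)" "z \<in> carrier (RF m)"
  then obtain a b c where "x = rf_class m a" "set a \<subseteq> alph m" "y = rf_class m b" "set b \<subseteq> alph m"
    "z = rf_class m c" "set c \<subseteq> alph m"
    by (auto simp: RF_carrier)
  then show "x \<otimes>\<^bsub>RF m\<^esub> y \<otimes>\<^bsub>RF m\<^esub> z = x \<otimes>\<^bsub>RF m\<^esub> (y \<otimes>\<^bsub>RF m\<^esub> z)"
    by (simp add: RF_mult_rf_class)
next
  fix x assume "x \<in> carrier (RF m)"
  then obtain a where "x = rf_class m a" "set a \<subseteq> alph m" by (auto simp: RF_carrier)
  then show "\<one>\<^bsub>RF m\<^esub> \<otimes>\<^bsub>RF m\<^esub> x = x" by (simp add: RF_one RF_mult_rf_class)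
next
  fix x assume "x \<in> carrier (RF m)"
  then obtain a where x: "x = rf_class m a" "set a \<subseteq> alph m" by (auto simp: RF_carrier)
  then have "set (inv_word a) \<subseteq> alph m" by simp
  then have "rf_class m (inv_word a) \<in> carrier (RF m)" unfolding RF_carrier by blast
  moreover have "rf_class m (inv_word a) \<otimes>\<^bsub>RF m\<^esub> x = \<one>\<^bsub>RF m\<^esub>"
    using x by (simp add: RF_mult_rf_class RF_one rf_class_eq rf_rel_inv_word_append)
  ultimately show "\<exists>y\<in>carrier (RF m). y \<otimes>\<^bsub>RF m\<^esub> x = \<one>\<^bsub>RF m\<^esub>" by blast
qed

lemma RF_inv_rf_class:
  assumes "set a \<subseteq> alph m"
  shows "inv\<^bsub>RF m\<^esub> (rf_class m a) = rf_class m (inv_word a)"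
proof -
  interpret group "RF m" by (rule group_RF)
  have "rf_class m (inv_word a) \<otimes>\<^bsub>RF m\<^esub> rf_class m a = \<one>\<^bsub>RF m\<^esub>"
    using assms by (simp add: RF_mult_rf_class RF_one rf_class_eq rf_rel_inv_word_append)
  moreover have "set (inv_word a) \<subseteq> alph m" using assms by simp
  then have "rf_class m (inv_word a) \<in> carrier (RF m)" "rf_class m a \<in> carrier (RF m)"
    using assms unfolding RF_carrier by blast+
  ultimately show ?thesis by (simp add: inv_equality)
qed

lemma rf_gen_in_carrier: "k < m \<Longrightarrow> rf_gen m k \<in> carrier (RF m)"
  by (auto simp: RF_carrier rf_gen_def)

lemma RF_carrier_eq_generate: "carrier (RF m) = generate (RF m) (rf_gen m ` {..<m})"
proof
  interpret group "RF m" by (rule group_RF)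
  show "generate (RF m) (rf_gen m ` {..<m}) \<subseteq> carrier (RF m)"
    by (rule generate_incl) (auto simp: rf_gen_in_carrier)
  have "rf_class m w \<in> generate (RF m) (rf_gen m ` {..<m})" if "set w \<subseteq> alph m" for w
    using that
  proof (induct w)
    case Nil
    then show ?case using generate.one[of "RF m"] by (simp add: RF_one)
  next
    case (Cons c w)
    obtain i b where c: "c = (i, b)" and i: "i < m" using Cons by (cases c) auto
    have "rf_class m [c] = (if b then inv\<^bsub>RF m\<^esub> (rf_gen m i) else rf_gen m i)"
      using c i by (simp add: rf_gen_def RF_inv_rf_class inv_word_def)
    then have "rf_class m [c] \<in> generate (RF m) (rf_gen m ` {..<m})"
      using i by (auto intro: generate.incl generate.inv)
    moreover have "rf_class m (c # w) = rf_class m [c] \<otimes>\<^bsub>RF m\<^esub> rf_class m w"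
      using Cons by (simp add: RF_mult_rf_class)
    ultimately show ?case using Cons by (auto intro: generate.eng)
  qed
  then show "carrier (RF m) \<subseteq> generate (RF m) (rf_gen m ` {..<m})"
    by (auto simp: RF_carrier)
qed

lemma rf_gen_commutes_gconj:
  assumes k: "k < m" and g: "g \<in> carrier (RF m)"
  shows "rf_gen m k \<otimes>\<^bsub>RF m\<^esub> gconj (RF m) g (rf_gen m k) = gconj (RF m) g (rf_gen m k) \<otimes>\<^bsub>RF m\<^esub> rf_gen m k"
proof -
  interpret group "RF m" by (rule group_RF)
  obtain w where w: "g = rf_class m w" "set w \<subseteq> alph m" using g by (auto simp: RF_carrier)
  define y where "y = inv_word w @ [(k, False)] @ w"
  have y: "set y \<subseteq> alph m" using w k by (auto simp: y_def)
  have conj: "gconj (RF m) g (rf_gen m k) = rf_class m y"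
    using w k by (simp add: gconj_def RF_inv_rf_class rf_gen_def RF_mult_rf_class y_def)
  have "rf_rel m ([] @ comm_word [(k, False)] y @ []) ([] @ [])"
    unfolding y_def by (rule rf_rel.rf_relator) (use w k in auto)
  then have "gcomm (RF m) (rf_gen m k) (rf_class m y) = \<one>\<^bsub>RF m\<^esub>"
    using k y rf_class_eq
    by (simp add: gcomm_def rf_gen_def RF_inv_rf_class RF_mult_rf_class RF_one comm_word_def)
  moreover have "rf_class m y \<in> carrier (RF m)" using y unfolding RF_carrier by blast
  ultimately show ?thesis
    unfolding conj using gcomm_eq_one_iff rf_gen_in_carrier[OF k] by blast
qed

section \<open>Generators that commute with their conjugates\<close>

locale rf_generators = group G for G (structure) +
  fixes x :: "nat \<Rightarrow> 'a" and m :: nat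
  assumes gen_closed: "k < m \<Longrightarrow> x k \<in> carrier G"
    and gen_commute_gconj: "k < m \<Longrightarrow> g \<in> carrier G \<Longrightarrow> x k \<otimes> gconj G g (x k) = gconj G g (x k) \<otimes> x k"
begin

definition span :: "'a set" where
  "span = generate G (x ` {..<m})"

definition normal_closure :: "nat \<Rightarrow> 'a set" where
  "normal_closure k = generate G {gconj G g (x k) | g. g \<in> span}"

lemma gens_subset_carrier: "x ` {..<m} \<subseteq> carrier G"
  using gen_closed by auto

sublocale span: subgroup span G
  unfolding span_def by (rule generate_is_subgroup[OF gens_subset_carrier])

lemma gen_in_span: "k < m \<Longrightarrow> x k \<in> span"
  unfolding span_def by (rule generate.incl) auto

lemma gcomm_in_span: "a \<in> span \<Longrightarrow> b \<in> span \<Longrightarrow> gcomm G a b \<in> span"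
  by (simp add: gcomm_def)

lemma gconj_in_span: "g \<in> span \<Longrightarrow> a \<in> span \<Longrightarrow> gconj G g a \<in> span"
  by (simp add: gconj_def)

lemma normal_closure_gens_subset_span: "k < m \<Longrightarrow> {gconj G g (x k) | g. g \<in> span} \<subseteq> span"
  using gen_in_span gconj_in_span by auto

lemma subgroup_normal_closure: "k < m \<Longrightarrow> subgroup (normal_closure k) G"
  unfolding normal_closure_def
  by (rule generate_is_subgroup) (use normal_closure_gens_subset_span span.subset in blast)

lemma normal_closure_subset_span: "k < m \<Longrightarrow> normal_closure k \<subseteq> span"
  unfolding normal_closure_def
  by (rule generate_subgroup_incl[OF normal_closure_gens_subset_span span.subgroup_axioms])

lemma normal_closure_subset_carrier: "k < m \<Longrightarrow> normal_closure k \<subseteq> carrier G"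
  using normal_closure_subset_span span.subset by blast

lemma gen_in_normal_closure: "k < m \<Longrightarrow> x k \<in> normal_closure k"
  unfolding normal_closure_def using gen_closed
  by (intro generate.incl CollectI exI[of _ \<one>]) auto

lemma gconj_normal_closure_closed:
  assumes k: "k < m" and s: "s \<in> span" and v: "v \<in> normal_closure k"
  shows "gconj G s v \<in> normal_closure k"
  using v unfolding normal_closure_def
proof (induct rule: generate.induct)
  case one
  then show ?case using s by (simp add: generate.one)
next
  case (incl h)
  then obtain g where g: "g \<in> span" "h = gconj G g (x k)" by auto
  then have "gconj G s h = gconj G (g \<otimes> s) (x k)"
    using s k by (simp add: gconj_mult_conjugator gen_closed)
  then show ?case using g s by (auto intro!: generate.incl)
next
  case (inv h)
  then obtain g where g: "g \<in> span" "h = gconj G g (x k)" by auto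
  then have "gconj G s (inv h) = inv (gconj G (g \<otimes> s) (x k))"
    using s k by (simp add: gconj_mult_conjugator gconj_inv gen_closed)
  then show ?case using g s by (auto intro!: generate.inv)
next
  case (eng h1 h2)
  then have "h1 \<in> carrier G" "h2 \<in> carrier G"
    using normal_closure_subset_carrier[OF k] by (auto simp: normal_closure_def)
  then show ?case using eng s by (simp add: gconj_mult generate.eng)
qed

lemma gconj_gen_commute:
  assumes k: "k < m" and g: "g \<in> carrier G" and h: "h \<in> carrier G"
  shows "gconj G g (x k) \<otimes> gconj G h (x k) = gconj G h (x k) \<otimes> gconj G g (x k)"
proof -
  have hg: "h \<otimes> inv g \<in> carrier G" using g h by simp
  have "gconj G h (x k) = gconj G g (gconj G (h \<otimes> inv g) (x k))"
    using g h gen_closed[OF k] by (simp add: gconj_mult_conjugator[symmetric] m_assoc)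
  then show ?thesis
    using arg_cong[OF gen_commute_gconj[OF k hg], of "gconj G g"] g hg gen_closed[OF k]
    by (simp add: gconj_mult)
qed

lemma normal_closure_commute:
  assumes k: "k < m" and a: "a \<in> normal_closure k" and b: "b \<in> normal_closure k"
  shows "a \<otimes> b = b \<otimes> a"
proof -
  let ?H = "{gconj G g (x k) | g. g \<in> span}"
  have H: "?H \<subseteq> carrier G" using normal_closure_gens_subset_span[OF k] span.subset by blast
  have "h \<otimes> b = b \<otimes> h" if "h \<in> ?H" for h
    using commute_generate[OF H, of h b] that b H gconj_gen_commute[OF k] span.mem_carrier
    unfolding normal_closure_def by blast
  then show ?thesis
    using commute_generate[OF H, of b a] a b normal_closure_subset_carrier[OF k]
    unfolding normal_closure_def by auto
qed

lemma gcomm_normal_closure_gen: "k < m \<Longrightarrow> v \<in> normal_closure k \<Longrightarrow> gcomm G v (x k) = \<one>"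
  using normal_closure_commute[of k v "x k"] gen_in_normal_closure gcomm_eq_one_iff
    normal_closure_subset_carrier gen_closed by blast

lemma gcomm_gen_in_normal_closure:
  assumes k: "k < m" and v: "v \<in> span"
  shows "gcomm G v (x k) \<in> normal_closure k"
proof -
  have "gcomm G v (x k) = inv (gconj G v (x k)) \<otimes> x k"
    using v k by (simp add: gcomm_def gconj_def m_assoc inv_mult_group gen_closed)
  moreover have "inv (gconj G v (x k)) \<in> normal_closure k"
    unfolding normal_closure_def using v by (auto intro!: generate.inv)
  ultimately show ?thesis
    using gen_in_normal_closure[OF k] subgroup.m_closed[OF subgroup_normal_closure[OF k]] by auto
qed

lemma gcomm_normal_closure_closed:
  assumes k: "k < m" and v: "v \<in> normal_closure k" and y: "y \<in> span"
  shows "gcomm G v y \<in> normal_closure k"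
  using gcomm_eq_inv_mult_gconj gconj_normal_closure_closed[OF k y v] v y k
    subgroup.m_closed[OF subgroup_normal_closure] subgroup.m_inv_closed[OF subgroup_normal_closure]
    normal_closure_subset_carrier
  by (metis span.mem_carrier subsetD)

text \<open>Holds because \<open>normal_closure k\<close> is abelian and normalised by the span.\<close>
lemma gcomm_normal_closure_mult:
  assumes k: "k < m" and a: "a \<in> normal_closure k" and b: "b \<in> normal_closure k" and y: "y \<in> span"
  shows "gcomm G (a \<otimes> b) y = gcomm G a y \<otimes> gcomm G b y"
  using normal_closure_commute[OF k gcomm_normal_closure_closed[OF k a y] b] a b y k
    normal_closure_subset_carrier
  by (intro gcomm_mult_left_commute) auto

lemma gcomm_normal_closure_inv:
  assumes k: "k < m" and a: "a \<in> normal_closure k" and y: "y \<in> span"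
  shows "gcomm G (inv a) y = inv (gcomm G a y)"
proof -
  have c: "a \<in> carrier G" "y \<in> carrier G" using a y k normal_closure_subset_carrier by auto
  have "gcomm G (inv a) y \<otimes> gcomm G a y = \<one>"
    using gcomm_normal_closure_mult[OF k subgroup.m_inv_closed[OF subgroup_normal_closure[OF k] a] a y] c
    by simp
  then show ?thesis using c by (simp add: inv_equality)
qed

lemma gcomm_normal_closure_int_pow:
  assumes k: "k < m" and a: "a \<in> normal_closure k" and y: "y \<in> span"
  shows "gcomm G (a [^] (n::int)) y = gcomm G a y [^] n"
  using normal_closure_commute[OF k a gcomm_normal_closure_closed[OF k a y]] a y k
    normal_closure_subset_carrier
  by (intro gcomm_int_pow_left) auto

lemma gcomm_inv_gen:
  assumes k: "k < m" and v: "v \<in> span"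
  shows "gcomm G v (inv (x k)) = inv (gcomm G v (x k))"
proof -
  have "gcomm G (gcomm G v (x k)) (x k) = \<one>"
    by (rule gcomm_normal_closure_gen[OF k gcomm_gen_in_normal_closure[OF k v]])
  then show ?thesis
    using v k gcomm_eq_one_iff by (intro gcomm_inv_right) (auto simp: gen_closed)
qed

end

section \<open>The filtration by iterated commutators\<close>

locale rf_generators_succ = rf_generators G x "Suc n" for G (structure) and x and n
begin

abbreviation N_last :: "'a set" where "N_last \<equiv> normal_closure n"

lemmas subgroup_N_last = subgroup_normal_closure[OF lessI]
lemmas N_last_subset_span = normal_closure_subset_span[OF lessI]

primrec iter_comms :: "nat list \<Rightarrow> 'a set" where
  "iter_comms [] = N_last"
| "iter_comms (k # \<sigma>) = (\<lambda>v. gcomm G v (x k)) ` iter_comms \<sigma>"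

definition level :: "nat \<Rightarrow> 'a set" where
  "level d = generate G (\<Union> {iter_comms \<sigma> | \<sigma>. length \<sigma> = d \<and> set \<sigma> \<subseteq> {..<n}})"

lemma iter_comms_subset_N_last: "set \<sigma> \<subseteq> {..<n} \<Longrightarrow> iter_comms \<sigma> \<subseteq> N_last"
proof (induct \<sigma>)
  case (Cons k \<sigma>)
  then have "x k \<in> span" by (simp add: gen_in_span)
  then show ?case using Cons gcomm_normal_closure_closed[OF lessI] by auto
qed simp

lemma subgroup_level: "subgroup (level d) G"
  unfolding level_def using iter_comms_subset_N_last N_last_subset_span span.subset
  by (intro generate_is_subgroup) blast

lemma level_subset_N_last: "level d \<subseteq> N_last"
  unfolding level_def using iter_comms_subset_N_last
  by (intro generate_subgroup_incl[OF _ subgroup_N_last]) blast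

lemma level_subset_span: "level d \<subseteq> span"
  using level_subset_N_last N_last_subset_span by blast

lemma level_subset_carrier: "level d \<subseteq> carrier G"
  using level_subset_span span.subset by blast

lemma level_mem_carrier [simp]: "v \<in> level d \<Longrightarrow> v \<in> carrier G"
  using level_subset_carrier by blast

lemma level_mem_span: "v \<in> level d \<Longrightarrow> v \<in> span"
  using level_subset_span by blast

lemma iter_comms_subset_level: "set \<sigma> \<subseteq> {..<n} \<Longrightarrow> iter_comms \<sigma> \<subseteq> level (length \<sigma>)"
  unfolding level_def by (blast intro: generate.incl)

lemma level_0: "level 0 = N_last"
proof -
  have "level 0 = generate G N_last" by (simp add: level_def)
  also have "\<dots> = N_last"
    using generate_subgroup_incl[OF _ subgroup_N_last] generate.incl[of _ N_last G] by blast
  finally show ?thesis .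
qed

lemma gcomm_level_gen_lt:
  assumes v: "v \<in> level d" and k: "k < n"
  shows "gcomm G v (x k) \<in> level (Suc d)"
  using v unfolding level_def
proof (induct rule: generate.induct)
  case one
  then show ?case using k by (simp add: gen_closed generate.one)
next
  case (incl h)
  then obtain \<sigma> where "h \<in> iter_comms \<sigma>" "length \<sigma> = d" "set \<sigma> \<subseteq> {..<n}" by auto
  then have "gcomm G h (x k) \<in> iter_comms (k # \<sigma>)" "length (k # \<sigma>) = Suc d"
    "set (k # \<sigma>) \<subseteq> {..<n}" using k by auto
  then show ?case by (blast intro: generate.incl)
next
  case (inv h)
  then obtain \<sigma> where \<sigma>: "h \<in> iter_comms \<sigma>" "length \<sigma> = d" "set \<sigma> \<subseteq> {..<n}" by auto
  then have "gcomm G h (x k) \<in> iter_comms (k # \<sigma>)" "length (k # \<sigma>) = Suc d"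
    "set (k # \<sigma>) \<subseteq> {..<n}" using k by simp_all
  then have "gcomm G h (x k) \<in> \<Union> {iter_comms \<sigma> | \<sigma>. length \<sigma> = Suc d \<and> set \<sigma> \<subseteq> {..<n}}"
    by blast
  then have "inv (gcomm G h (x k)) \<in> generate G (\<Union> {iter_comms \<sigma> | \<sigma>. length \<sigma> = Suc d \<and> set \<sigma> \<subseteq> {..<n}})"
    by (rule generate.inv)
  moreover have "gcomm G (inv h) (x k) = inv (gcomm G h (x k))"
    using \<sigma> iter_comms_subset_N_last k by (intro gcomm_normal_closure_inv[OF lessI]) (auto intro: gen_in_span)
  ultimately show ?case by simp
next
  case (eng h1 h2)
  then have "h1 \<in> N_last" "h2 \<in> N_last"
    using level_subset_N_last unfolding level_def by auto
  then have "gcomm G (h1 \<otimes> h2) (x k) = gcomm G h1 (x k) \<otimes> gcomm G h2 (x k)"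
    using k by (intro gcomm_normal_closure_mult[OF lessI]) (auto intro: gen_in_span)
  then show ?case using eng by (simp add: generate.eng)
qed

lemma level_Suc_subset: "level (Suc d) \<subseteq> level d"
proof (induct d)
  case 0
  show ?case using level_subset_N_last level_0 by simp
next
  case (Suc d)
  have "iter_comms \<sigma> \<subseteq> level (Suc d)"
    if len: "length \<sigma> = Suc (Suc d)" and idx: "set \<sigma> \<subseteq> {..<n}" for \<sigma>
  proof -
    obtain k \<tau> where \<sigma>: "\<sigma> = k # \<tau>" using len by (cases \<sigma>) auto
    then have "iter_comms \<tau> \<subseteq> level d" using len idx Suc iter_comms_subset_level[of \<tau>] by auto
    then show ?thesis using \<sigma> idx gcomm_level_gen_lt by auto
  qed
  then show ?case unfolding level_def[of "Suc (Suc d)"]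
    by (intro generate_subgroup_incl[OF _ subgroup_level]) blast
qed

lemma gcomm_level_gen:
  assumes v: "v \<in> level d" and k: "k < Suc n"
  shows "gcomm G v (x k) \<in> level (Suc d)"
proof (cases "k = n")
  case True
  have "v \<in> N_last" using v level_subset_N_last by blast
  then show ?thesis
    using True gcomm_normal_closure_gen[OF lessI] subgroup.one_closed[OF subgroup_level] by simp
next
  case False
  then show ?thesis using gcomm_level_gen_lt[OF v] k by simp
qed

lemma gcomm_level_span:
  assumes v: "v \<in> level d" and s: "s \<in> span"
  shows "gcomm G v s \<in> level (Suc d)"
proof -
  have "\<forall>d. \<forall>v \<in> level d. gcomm G v s \<in> level (Suc d)"
    using s unfolding span_def
  proof (induct rule: generate.induct)
    case (incl h)
    then show ?case using gcomm_level_gen by auto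
  next
    case (inv h)
    then obtain k where k: "k < Suc n" "h = x k" by auto
    show ?case
    proof (intro allI ballI)
      fix d v assume v: "v \<in> level d"
      then have "gcomm G v (inv h) = inv (gcomm G v (x k))"
        using k level_subset_span gcomm_inv_gen by blast
      then show "gcomm G v (inv h) \<in> level (Suc d)"
        using gcomm_level_gen[OF v k(1)] subgroup.m_inv_closed[OF subgroup_level] by simp
    qed
  next
    case (eng h1 h2)
    then have h: "h1 \<in> carrier G" "h2 \<in> carrier G" using span.subset unfolding span_def by auto
    show ?case
    proof (intro allI ballI)
      fix d v assume v: "v \<in> level d"
      let ?w = "gcomm G v h1"
      have w: "?w \<in> level (Suc d)" using eng(2) v by blast
      then have "gcomm G ?w h2 \<in> level (Suc d)" using eng(4) level_Suc_subset by blast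
      moreover have "gcomm G v (h1 \<otimes> h2) = gcomm G v h2 \<otimes> (?w \<otimes> gcomm G ?w h2)"
        using v h by (simp add: gcomm_mult_right gconj_eq_mult_gcomm)
      ultimately show "gcomm G v (h1 \<otimes> h2) \<in> level (Suc d)"
        using eng(4) v w subgroup.m_closed[OF subgroup_level] by simp
    qed
  qed (use subgroup.one_closed[OF subgroup_level] in simp)
  then show ?thesis using v by blast
qed

lemma gconj_level_closed:
  assumes "s \<in> span" "v \<in> level d"
  shows "gconj G s v \<in> level d"
proof -
  have "gconj G s v = v \<otimes> gcomm G v s" using assms by (simp add: gconj_eq_mult_gcomm)
  moreover have "gcomm G v s \<in> level d" using gcomm_level_span[OF assms(2,1)] level_Suc_subset by blast
  ultimately show ?thesis using assms(2) subgroup.m_closed[OF subgroup_level] by simp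
qed

lemma gcomm_span_level:
  assumes "v \<in> level d" "s \<in> span"
  shows "gcomm G s v \<in> level (Suc d)"
proof -
  have "v \<in> carrier G" "s \<in> carrier G" using assms level_subset_carrier by auto
  then have "gcomm G s v = inv (gcomm G v s)" by (simp add: inv_gcomm)
  then show ?thesis using gcomm_level_span[OF assms] subgroup.m_inv_closed[OF subgroup_level] by simp
qed

lemma iter_comms_subset_normal_closure:
  "set \<sigma> \<subseteq> {..<n} \<Longrightarrow> k \<in> set \<sigma> \<Longrightarrow> iter_comms \<sigma> \<subseteq> normal_closure k"
proof (induct \<sigma>)
  case (Cons j \<sigma>)
  then have j: "j < Suc n" and k: "k < Suc n" by auto
  show ?case
  proof (cases "k = j")
    case True
    then show ?thesis
      using gcomm_gen_in_normal_closure[OF j] iter_comms_subset_N_last[of \<sigma>] N_last_subset_span Cons(2)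
      by auto
  next
    case False
    then show ?thesis
      using Cons gcomm_normal_closure_closed[OF k] gen_in_span[OF j] by auto
  qed
qed simp

lemma iter_comms_nondistinct:
  "set \<sigma> \<subseteq> {..<n} \<Longrightarrow> \<not> distinct \<sigma> \<Longrightarrow> iter_comms \<sigma> \<subseteq> {\<one>}"
proof (induct \<sigma>)
  case (Cons j \<sigma>)
  then have j: "j < Suc n" by auto
  show ?case
  proof (cases "j \<in> set \<sigma>")
    case True
    then show ?thesis
      using iter_comms_subset_normal_closure[of \<sigma> j] Cons(2) gcomm_normal_closure_gen[OF j] by auto
  next
    case False
    then show ?thesis using Cons gen_closed[OF j] by auto
  qed
qed simp

lemma level_trivial: "n < d \<Longrightarrow> level d = {\<one>}"
proof -
  assume d: "n < d"
  have "iter_comms \<sigma> \<subseteq> {\<one>}" if \<sigma>: "length \<sigma> = d" "set \<sigma> \<subseteq> {..<n}" for \<sigma>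
  proof -
    have "card (set \<sigma>) \<le> card {..<n}" using \<sigma>(2) by (intro card_mono) auto
    then have "card (set \<sigma>) \<noteq> length \<sigma>" using \<sigma>(1) d by simp
    then have "\<not> distinct \<sigma>" using distinct_card by blast
    then show ?thesis using iter_comms_nondistinct \<sigma>(2) by blast
  qed
  then have "level d \<subseteq> {\<one>}"
    unfolding level_def by (intro generate_subgroup_incl[OF _ triv_subgroup]) blast
  then show ?thesis using subgroup.one_closed[OF subgroup_level] by blast
qed

section \<open>Congruence modulo the filtration\<close>

lemma lcos_level_iff: "a \<in> b <# level d \<longleftrightarrow> (\<exists>e \<in> level d. a = b \<otimes> e)"
  by (auto simp: l_coset_def)

lemma lcos_level_refl: "b \<in> carrier G \<Longrightarrow> b \<in> b <# level d"
  using subgroup.one_closed[OF subgroup_level] by (force simp: lcos_level_iff)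

lemma lcos_level_trans:
  assumes "a \<in> b <# level d" "b \<in> c <# level d" "c \<in> carrier G"
  shows "a \<in> c <# level d"
proof -
  obtain e e' where e: "e \<in> level d" "a = b \<otimes> e" and e': "e' \<in> level d" "b = c \<otimes> e'"
    using assms(1,2) by (auto simp: lcos_level_iff)
  then have "a = c \<otimes> (e' \<otimes> e)" using assms(3) by (simp add: m_assoc)
  then show ?thesis using e e' subgroup.m_closed[OF subgroup_level] by (auto simp: lcos_level_iff)
qed

lemma lcos_level_sym:
  assumes "a \<in> b <# level d" "b \<in> carrier G"
  shows "b \<in> a <# level d"
proof -
  obtain e where e: "e \<in> level d" "a = b \<otimes> e" using assms(1) by (auto simp: lcos_level_iff)
  then have "b = a \<otimes> inv e" using assms(2) by (simp add: m_assoc)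
  then show ?thesis using e subgroup.m_inv_closed[OF subgroup_level] by (auto simp: lcos_level_iff)
qed

text \<open>Holds because \<open>level d\<close> is normalised by the span.\<close>
lemma lcos_level_mult:
  assumes "a \<in> b <# level d" "a' \<in> b' <# level d" "b \<in> carrier G" "b' \<in> span"
  shows "a \<otimes> a' \<in> (b \<otimes> b') <# level d"
proof -
  obtain e e' where e: "e \<in> level d" "a = b \<otimes> e" and e': "e' \<in> level d" "a' = b' \<otimes> e'"
    using assms(1,2) by (auto simp: lcos_level_iff)
  have c: "e \<in> carrier G" "e' \<in> carrier G" "b' \<in> carrier G"
    using e e' level_subset_carrier assms(4) by auto
  have "a \<otimes> a' = (b \<otimes> b') \<otimes> (gconj G b' e \<otimes> e')"
    using e e' c assms(3) by (simp add: gconj_def m_assoc)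
  moreover have "gconj G b' e \<otimes> e' \<in> level d"
    using gconj_level_closed[OF assms(4) e(1)] e'(1) subgroup.m_closed[OF subgroup_level] by blast
  ultimately show ?thesis by (auto simp: lcos_level_iff)
qed

lemma lcos_level_mult_left:
  "a \<in> b <# level d \<Longrightarrow> b \<in> carrier G \<Longrightarrow> c \<in> carrier G \<Longrightarrow> c \<otimes> a \<in> (c \<otimes> b) <# level d"
  by (force simp: lcos_level_iff m_assoc)

lemma span_mult_level_lcos:
  assumes "v \<in> level d" "s \<in> span"
  shows "s \<otimes> v \<in> (v \<otimes> s) <# level (Suc d)"
  using m_swap_gcomm[of s v] gcomm_span_level[OF assms] assms unfolding lcos_level_iff by auto

lemma level_mult_span_lcos:
  assumes "v \<in> level d" "s \<in> span"
  shows "v \<otimes> s \<in> (s \<otimes> v) <# level (Suc d)"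
  using lcos_level_sym[OF span_mult_level_lcos[OF assms]] assms by simp

lemma oprod_lcos_level:
  assumes "\<And>q. q \<in> set xs \<Longrightarrow> f q \<in> g q <# level d" "\<And>q. q \<in> set xs \<Longrightarrow> g q \<in> span"
  shows "oprod G f xs \<in> oprod G g xs <# level d"
  using assms
proof (induct xs)
  case (Cons a xs)
  then show ?case by (simp add: lcos_level_mult oprod_in_subgroup[OF span.subgroup_axioms])
qed (simp add: lcos_level_refl)

text \<open>Modulo \<open>level (Suc d)\<close>, the elements of \<open>level d\<close> commute with the span, so they can be
  moved into place.\<close>
lemma oprod_mult_lcos_level:
  assumes "\<And>q. q \<in> set xs \<Longrightarrow> f q \<in> span" "\<And>q. q \<in> set xs \<Longrightarrow> g q \<in> level d"
  shows "oprod G f xs \<otimes> oprod G g xs \<in> oprod G (\<lambda>q. f q \<otimes> g q) xs <# level (Suc d)"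
  using assms
proof (induct xs)
  case (Cons a xs)
  let ?F = "oprod G f xs" and ?H = "oprod G g xs" and ?R = "oprod G (\<lambda>q. f q \<otimes> g q) xs"
  have fa: "f a \<in> span" and ga: "g a \<in> level d" using Cons(2,3) by auto
  have fg: "f q \<in> span" "g q \<in> span" if "q \<in> set xs" for q
    using Cons(2,3) that level_mem_span by auto
  have F: "?F \<in> span" and H: "?H \<in> span" and R: "?R \<in> span"
    using fg by (auto intro!: oprod_in_subgroup[OF span.subgroup_axioms])
  have IH: "?F \<otimes> ?H \<in> ?R <# level (Suc d)" using Cons by simp
  have "(?F \<otimes> g a) \<otimes> ?H \<in> ((g a \<otimes> ?F) \<otimes> ?H) <# level (Suc d)"
    by (rule lcos_level_mult[OF span_mult_level_lcos[OF ga F] lcos_level_refl]) (use F H ga in auto)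
  then have "f a \<otimes> ((?F \<otimes> g a) \<otimes> ?H) \<in> (f a \<otimes> g a \<otimes> (?F \<otimes> ?H)) <# level (Suc d)"
    using fa F H ga by (simp add: lcos_level_mult_left m_assoc)
  moreover have "f a \<otimes> g a \<otimes> (?F \<otimes> ?H) \<in> (f a \<otimes> g a \<otimes> ?R) <# level (Suc d)"
    by (rule lcos_level_mult_left[OF IH]) (use R fa ga in auto)
  ultimately have "f a \<otimes> ((?F \<otimes> g a) \<otimes> ?H) \<in> (f a \<otimes> g a \<otimes> ?R) <# level (Suc d)"
    by (rule lcos_level_trans) (use fa ga R in auto)
  then show ?case using fa ga F H by (simp add: m_assoc)
qed (simp add: lcos_level_refl)

lemma oprod_filter_lcos_level:
  assumes "\<And>q. q \<in> set xs \<Longrightarrow> f q \<in> span" "\<And>q. q \<in> set xs \<Longrightarrow> P q \<Longrightarrow> f q \<in> level d"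
  shows "oprod G f xs \<in> (oprod G f (filter (\<lambda>q. \<not> P q) xs) \<otimes> oprod G f (filter P xs)) <# level (Suc d)"
  using assms
proof (induct xs)
  case (Cons a xs)
  let ?U = "oprod G f (filter (\<lambda>q. \<not> P q) xs)" and ?W = "oprod G f (filter P xs)"
  have fa: "f a \<in> span" using Cons(2) by simp
  have U: "?U \<in> span" and W: "?W \<in> span"
    using Cons(2) by (auto intro!: oprod_in_subgroup[OF span.subgroup_axioms])
  have "oprod G f xs \<in> (?U \<otimes> ?W) <# level (Suc d)" using Cons by simp
  then have step: "f a \<otimes> oprod G f xs \<in> (f a \<otimes> (?U \<otimes> ?W)) <# level (Suc d)"
    using fa U W by (intro lcos_level_mult_left) auto
  show ?case
  proof (cases "P a")
    case True
    then have "f a \<otimes> ?U \<in> (?U \<otimes> f a) <# level (Suc d)"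
      using level_mult_span_lcos Cons(3) U by simp
    then have "(f a \<otimes> ?U) \<otimes> ?W \<in> ((?U \<otimes> f a) \<otimes> ?W) <# level (Suc d)"
      by (rule lcos_level_mult[OF _ lcos_level_refl]) (use fa U W in auto)
    then have "f a \<otimes> (?U \<otimes> ?W) \<in> (?U \<otimes> (f a \<otimes> ?W)) <# level (Suc d)"
      using fa U W by (simp add: m_assoc)
    from lcos_level_trans[OF step this] show ?thesis using True fa U W by simp
  next
    case False
    then show ?thesis using step fa U W by (simp add: m_assoc)
  qed
qed (simp add: lcos_level_refl)

section \<open>Products of double commutators\<close>

abbreviation comm3 :: "'a \<Rightarrow> nat \<Rightarrow> nat \<Rightarrow> 'a" where
  "comm3 w i j \<equiv> gcomm G (gcomm G w (x i)) (x j)"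

lemma comm3_in_span: "w \<in> span \<Longrightarrow> i < Suc n \<Longrightarrow> j < Suc n \<Longrightarrow> comm3 w i j \<in> span"
  by (simp add: gcomm_in_span gen_in_span)

lemma comm3_in_level: "w \<in> level d \<Longrightarrow> i < Suc n \<Longrightarrow> j < Suc n \<Longrightarrow> comm3 w i j \<in> level (Suc (Suc d))"
  by (simp add: gcomm_level_gen)

lemma comm3_N_last_mult:
  assumes "a \<in> N_last" "b \<in> N_last" "i < Suc n" "j < Suc n"
  shows "comm3 (a \<otimes> b) i j = comm3 a i j \<otimes> comm3 b i j"
  using assms gen_in_span
  by (simp add: gcomm_normal_closure_mult[OF lessI] gcomm_normal_closure_closed[OF lessI])

lemma comm3_N_last_inv:
  assumes "a \<in> N_last" "i < Suc n" "j < Suc n"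
  shows "comm3 (inv a) i j = inv (comm3 a i j)"
  using assms gen_in_span
  by (simp add: gcomm_normal_closure_inv[OF lessI] gcomm_normal_closure_closed[OF lessI])

lemma comm3_mult_left_level:
  assumes \<nu>: "\<nu> \<in> level k" and a: "a \<in> span" and i: "i < Suc n" and j: "j < Suc n"
  shows "\<exists>E \<in> level (Suc (Suc (Suc k))). comm3 (\<nu> \<otimes> a) i j = comm3 \<nu> i j \<otimes> E \<otimes> comm3 a i j"
proof -
  have X: "x i \<in> span" and Y: "x j \<in> span" using i j gen_in_span by auto
  define w where "w = gcomm G \<nu> (x i)"
  define g where "g = gcomm G w a"
  define u where "u = gcomm G a (x i)"
  have w: "w \<in> level (Suc k)" unfolding w_def using gcomm_level_span[OF \<nu> X] .
  have g: "g \<in> level (Suc (Suc k))" unfolding g_def using gcomm_level_span[OF w a] .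
  then have wg: "w \<otimes> g \<in> level (Suc k)"
    using w level_Suc_subset subgroup.m_closed[OF subgroup_level] by blast
  have u: "u \<in> span" unfolding u_def using a X by (rule gcomm_in_span)
  define p where "p = gcomm G (w \<otimes> g) (x j)"
  define E where "E = gcomm G g (x j) \<otimes> gcomm G p u"
  have p: "p = gcomm G w (x j) \<otimes> gcomm G g (x j)"
    unfolding p_def using w g Y level_subset_N_last by (intro gcomm_normal_closure_mult[OF lessI]) auto
  have "gcomm G (\<nu> \<otimes> a) (x i) = (w \<otimes> g) \<otimes> u"
    using \<nu> a X by (simp add: w_def g_def u_def gcomm_mult_left gconj_eq_mult_gcomm)
  then have "comm3 (\<nu> \<otimes> a) i j = p \<otimes> gcomm G p u \<otimes> gcomm G u (x j)"
    using wg u Y by (simp add: p_def gcomm_mult_left gconj_eq_mult_gcomm)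
  also have "\<dots> = gcomm G w (x j) \<otimes> (gcomm G g (x j) \<otimes> gcomm G p u) \<otimes> gcomm G u (x j)"
    using w g u Y by (simp add: p m_assoc)
  finally have "comm3 (\<nu> \<otimes> a) i j = comm3 \<nu> i j \<otimes> E \<otimes> comm3 a i j"
    by (simp add: E_def w_def u_def)
  moreover have "E \<in> level (Suc (Suc (Suc k)))"
    unfolding E_def p_def using gcomm_level_span[OF g Y] gcomm_level_span[OF gcomm_level_span[OF wg Y] u]
    by (intro subgroup.m_closed[OF subgroup_level])
  ultimately show ?thesis by blast
qed

lemma comm3_mult_lcos_level:
  assumes \<nu>: "\<nu> \<in> level k" and a: "a \<in> span" and i: "i < Suc n" and j: "j < Suc n"
  shows "comm3 a i j \<otimes> comm3 \<nu> i j \<in> comm3 (\<nu> \<otimes> a) i j <# level (Suc (Suc (Suc k)))"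
proof -
  obtain E where E: "E \<in> level (Suc (Suc (Suc k)))"
    and eq: "comm3 (\<nu> \<otimes> a) i j = comm3 \<nu> i j \<otimes> E \<otimes> comm3 a i j"
    using comm3_mult_left_level[OF assms] by blast
  have p: "comm3 \<nu> i j \<in> level (Suc (Suc k))" using comm3_in_level[OF \<nu> i j] .
  have q: "comm3 a i j \<in> span" using comm3_in_span[OF a i j] .
  have "comm3 \<nu> i j \<otimes> comm3 a i j \<otimes> gconj G (comm3 a i j) E = comm3 \<nu> i j \<otimes> E \<otimes> comm3 a i j"
    using p q E by (simp add: gconj_def m_assoc)
  then have "comm3 (\<nu> \<otimes> a) i j = comm3 \<nu> i j \<otimes> comm3 a i j \<otimes> gconj G (comm3 a i j) E"
    using eq by simp
  then have "comm3 (\<nu> \<otimes> a) i j \<in> (comm3 \<nu> i j \<otimes> comm3 a i j) <# level (Suc (Suc (Suc k)))"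
    unfolding lcos_level_iff using gconj_level_closed[OF q E] by blast
  then have "comm3 \<nu> i j \<otimes> comm3 a i j \<in> comm3 (\<nu> \<otimes> a) i j <# level (Suc (Suc (Suc k)))"
    by (rule lcos_level_sym) (use p q in auto)
  then show ?thesis
    by (rule lcos_level_trans[OF span_mult_level_lcos[OF p q]]) (use \<nu> a i j in \<open>simp add: gen_closed\<close>)
qed

lemma comm3_prod_Suc:
  "comm3_prod G x \<omega> (Suc n) = oprod G (\<lambda>(i, j). comm3 (\<omega> i j) i j) [(i, j). i \<leftarrow> [0..<n], j \<leftarrow> [0..<n]]"
  by (simp add: comm3_prod_def)

lemma comm3_prod_in_span: "(\<And>i j. \<omega> i j \<in> span) \<Longrightarrow> comm3_prod G x \<omega> (Suc n) \<in> span"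
  unfolding comm3_prod_Suc
  by (intro oprod_in_subgroup[OF span.subgroup_axioms]) (auto simp: comm3_in_span)

lemma comm3_prod_single:
  assumes "w \<in> carrier G" "i < n" "j < n"
  shows "comm3_prod G x (\<lambda>a b. if a = i \<and> b = j then w else \<one>) (Suc n) = comm3 w i j"
proof -
  let ?f = "\<lambda>(a, b). comm3 (if a = i \<and> b = j then w else \<one>) a b"
  have "oprod G ?f [(a, b). a \<leftarrow> [0..<n], b \<leftarrow> [0..<n]] = ?f (i, j)"
    by (rule oprod_eq_single) (use assms in \<open>auto simp: distinct_pairs gen_closed image_iff split: if_splits\<close>)
  then show ?thesis by (simp add: comm3_prod_Suc)
qed

lemma comm3_prod_pad:
  assumes "\<And>i j. \<omega> i j \<in> carrier G"
  shows "comm3_prod G x \<omega> n = comm3_prod G x (\<lambda>i j. if i < n - 1 \<and> j < n - 1 then \<omega> i j else \<one>) (Suc n)"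
proof -
  let ?\<omega> = "\<lambda>i j. if i < n - 1 \<and> j < n - 1 then \<omega> i j else \<one>"
  have "comm3_prod G x ?\<omega> (Suc n) = oprod G (\<lambda>(i, j). comm3 (?\<omega> i j) i j)
      (filter (\<lambda>(i, j). i < n - 1 \<and> j < n - 1) [(i, j). i \<leftarrow> [0..<n], j \<leftarrow> [0..<n]])"
    unfolding comm3_prod_Suc by (rule oprod_filter) (auto simp: assms gen_closed split: if_splits)
  also have "\<dots> = comm3_prod G x \<omega> n"
    unfolding filter_square_pairs[OF diff_le_self] comm3_prod_def by (rule oprod_cong) auto
  finally show ?thesis by simp
qed

lemma comm3_prod_mult_distrib:
  assumes "\<And>i j. \<nu>1 i j \<in> N_last" "\<And>i j. \<nu>2 i j \<in> N_last"
  shows "comm3_prod G x (\<lambda>i j. \<nu>1 i j \<otimes> \<nu>2 i j) (Suc n) = comm3_prod G x \<nu>1 (Suc n) \<otimes> comm3_prod G x \<nu>2 (Suc n)"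
  unfolding comm3_prod_Suc
proof (subst oprod_mult_distrib_commute[OF subgroup_N_last normal_closure_commute[OF lessI], symmetric])
  fix q assume "q \<in> set [(i, j). i \<leftarrow> [0..<n], j \<leftarrow> [0..<n]]"
  then obtain i j where "q = (i, j)" "i < n" "j < n" by auto
  then show "(\<lambda>(i, j). comm3 (\<nu>1 i j) i j) q \<in> N_last \<and> (\<lambda>(i, j). comm3 (\<nu>2 i j) i j) q \<in> N_last"
    using assms by (simp add: gcomm_normal_closure_closed[OF lessI] gen_in_span)
next
  show "oprod G (\<lambda>(i, j). comm3 (\<nu>1 i j \<otimes> \<nu>2 i j) i j) [(i, j). i \<leftarrow> [0..<n], j \<leftarrow> [0..<n]]
    = oprod G (\<lambda>q. (\<lambda>(i, j). comm3 (\<nu>1 i j) i j) q \<otimes> (\<lambda>(i, j). comm3 (\<nu>2 i j) i j) q)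
        [(i, j). i \<leftarrow> [0..<n], j \<leftarrow> [0..<n]]"
    using assms by (intro oprod_cong) (auto simp: comm3_N_last_mult)
qed

lemma iter_comms_Suc_Suc_eq_comm3:
  assumes "h \<in> iter_comms \<sigma>" "length \<sigma> = Suc (Suc d)" "set \<sigma> \<subseteq> {..<n}"
  obtains v i j where "v \<in> level d" "i < n" "j < n" "h = comm3 v i j"
proof -
  obtain j i \<tau> where \<sigma>: "\<sigma> = j # i # \<tau>" using assms(2) by (cases \<sigma>; cases "tl \<sigma>") auto
  then obtain v where "v \<in> iter_comms \<tau>" "h = comm3 v i j" using assms(1) by auto
  moreover have "iter_comms \<tau> \<subseteq> level d"
    using iter_comms_subset_level[of \<tau>] assms(2,3) \<sigma> by auto
  ultimately show ?thesis using that assms(3) \<sigma> by auto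
qed

lemma level_Suc_Suc_eq_comm3_prod:
  assumes "r \<in> level (Suc (Suc d))"
  shows "\<exists>\<nu>. (\<forall>i j. \<nu> i j \<in> level d) \<and> r = comm3_prod G x \<nu> (Suc n)"
  using assms unfolding level_def[of "Suc (Suc d)"]
proof (induct rule: generate.induct)
  case one
  have "comm3_prod G x (\<lambda>_ _. \<one>) (Suc n) = \<one>"
    unfolding comm3_prod_Suc by (rule oprod_eq_one) (auto simp: gen_closed)
  then show ?case using subgroup.one_closed[OF subgroup_level] by metis
next
  case (incl h)
  then obtain v i j where v: "v \<in> level d" "i < n" "j < n" "h = comm3 v i j"
    using iter_comms_Suc_Suc_eq_comm3 by blast
  then show ?case
    using comm3_prod_single[of v i j] subgroup.one_closed[OF subgroup_level]
    by (intro exI[of _ "\<lambda>a b. if a = i \<and> b = j then v else \<one>"]) auto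
next
  case (inv h)
  then obtain v i j where v: "v \<in> level d" "i < n" "j < n" "h = comm3 v i j"
    using iter_comms_Suc_Suc_eq_comm3 by blast
  moreover have "v \<in> N_last" using v(1) level_subset_N_last by blast
  ultimately have "inv h = comm3 (inv v) i j"
    using comm3_N_last_inv[OF _ less_SucI less_SucI] by simp
  then show ?case
    using v comm3_prod_single[of "inv v" i j] subgroup.one_closed[OF subgroup_level]
      subgroup.m_inv_closed[OF subgroup_level]
    by (intro exI[of _ "\<lambda>a b. if a = i \<and> b = j then inv v else \<one>"]) auto
next
  case (eng h1 h2)
  then obtain \<nu>1 \<nu>2 where \<nu>1: "\<forall>i j. \<nu>1 i j \<in> level d" "h1 = comm3_prod G x \<nu>1 (Suc n)"
    and \<nu>2: "\<forall>i j. \<nu>2 i j \<in> level d" "h2 = comm3_prod G x \<nu>2 (Suc n)"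
    by blast
  then have "h1 \<otimes> h2 = comm3_prod G x (\<lambda>i j. \<nu>1 i j \<otimes> \<nu>2 i j) (Suc n)"
    using level_subset_N_last by (subst comm3_prod_mult_distrib) blast+
  then show ?case
    using \<nu>1(1) \<nu>2(1) subgroup.m_closed[OF subgroup_level] by (intro exI[of _ "\<lambda>i j. \<nu>1 i j \<otimes> \<nu>2 i j"]) simp
qed

lemma comm3_prod_mult_lcos_level:
  assumes \<omega>: "\<And>i j. \<omega> i j \<in> span" and \<nu>: "\<And>i j. \<nu> i j \<in> level k"
  shows "comm3_prod G x \<omega> (Suc n) \<otimes> comm3_prod G x \<nu> (Suc n)
    \<in> comm3_prod G x (\<lambda>i j. \<nu> i j \<otimes> \<omega> i j) (Suc n) <# level (Suc (Suc (Suc k)))"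
  unfolding comm3_prod_Suc
proof (rule lcos_level_trans)
  have \<nu>_span: "\<nu> i j \<in> span" for i j using \<nu> level_mem_span by blast
  let ?L = "[(i, j). i \<leftarrow> [0..<n], j \<leftarrow> [0..<n]]"
  show "oprod G (\<lambda>(i, j). comm3 (\<omega> i j) i j) ?L \<otimes> oprod G (\<lambda>(i, j). comm3 (\<nu> i j) i j) ?L
    \<in> oprod G (\<lambda>q. (\<lambda>(i, j). comm3 (\<omega> i j) i j) q \<otimes> (\<lambda>(i, j). comm3 (\<nu> i j) i j) q) ?L
      <# level (Suc (Suc (Suc k)))"
    using \<omega> \<nu> by (intro oprod_mult_lcos_level) (auto simp: comm3_in_span comm3_in_level)
  show "oprod G (\<lambda>q. (\<lambda>(i, j). comm3 (\<omega> i j) i j) q \<otimes> (\<lambda>(i, j). comm3 (\<nu> i j) i j) q) ?L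
    \<in> oprod G (\<lambda>(i, j). comm3 (\<nu> i j \<otimes> \<omega> i j) i j) ?L <# level (Suc (Suc (Suc k)))"
    using \<omega> \<nu> \<nu>_span by (intro oprod_lcos_level) (auto simp: comm3_mult_lcos_level comm3_in_span)
  show "oprod G (\<lambda>(i, j). comm3 (\<nu> i j \<otimes> \<omega> i j) i j) ?L \<in> carrier G"
    using \<omega> \<nu>_span by (intro oprod_closed) (auto simp: gen_closed)
qed

text \<open>Since \<open>level d\<close> is trivial for \<open>d > n\<close>, a factor from \<open>level 2\<close> can be absorbed into the
  \<open>\<omega>\<close>'s after finitely many steps, each of which pushes the error one level deeper.\<close>
lemma comm3_prod_mult_level:
  assumes "\<And>i j. \<omega> i j \<in> span" and "r \<in> level (Suc (Suc k))"
  shows "\<exists>\<omega>'. (\<forall>i j. \<omega>' i j \<in> span) \<and> comm3_prod G x \<omega> (Suc n) \<otimes> r = comm3_prod G x \<omega>' (Suc n)"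
  using assms
proof (induct "n - k" arbitrary: k \<omega> r)
  case 0
  then have "r = \<one>" using level_trivial[of "Suc (Suc k)"] by auto
  then show ?case using 0 comm3_prod_in_span by auto
next
  case (Suc l)
  obtain \<nu> where \<nu>: "\<forall>i j. \<nu> i j \<in> level k" "r = comm3_prod G x \<nu> (Suc n)"
    using level_Suc_Suc_eq_comm3_prod[OF Suc(4)] by blast
  define \<omega>' where "\<omega>' = (\<lambda>i j. \<nu> i j \<otimes> \<omega> i j)"
  have \<omega>': "\<omega>' i j \<in> span" for i j
    unfolding \<omega>'_def using \<nu>(1) Suc(3) level_mem_span by blast
  obtain e where e: "e \<in> level (Suc (Suc (Suc k)))"
    "comm3_prod G x \<omega> (Suc n) \<otimes> r = comm3_prod G x \<omega>' (Suc n) \<otimes> e"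
    using comm3_prod_mult_lcos_level[of \<omega> \<nu> k] Suc(3) \<nu> unfolding \<omega>'_def lcos_level_iff by blast
  moreover have "l = n - Suc k" using Suc(2) by arith
  then obtain \<omega>'' where "\<forall>i j. \<omega>'' i j \<in> span"
    "comm3_prod G x \<omega>' (Suc n) \<otimes> e = comm3_prod G x \<omega>'' (Suc n)"
    using Suc(1)[of "Suc k" \<omega>' e] \<omega>' e(1) by blast
  ultimately show ?case by auto
qed

section \<open>Splitting off the last generator\<close>

lemma generate_init_subset_span: "generate G (x ` {..<n}) \<subseteq> span"
  unfolding span_def by (rule mono_generate) auto

lemma span_decomp:
  assumes "z \<in> span"
  shows "\<exists>h \<in> generate G (x ` {..<n}). \<exists>v \<in> N_last. z = h \<otimes> v"
  using assms unfolding span_def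
proof (induct rule: generate.induct)
  let ?I = "generate G (x ` {..<n})"
  have split: "\<exists>h \<in> ?I. \<exists>v \<in> N_last. y = h \<otimes> v" if "y \<in> ?I \<or> y \<in> N_last" for y
  proof -
    have "y \<in> carrier G" using that generate_init_subset_span N_last_subset_span by auto
    then show ?thesis
      using that generate.one[of G] subgroup.one_closed[OF subgroup_N_last] by force
  qed
  have gen: "x k \<in> ?I \<or> x k \<in> N_last" if "k < Suc n" for k
    using that gen_in_normal_closure[OF lessI] by (cases "k = n") (auto intro: generate.incl)
  {
    case one
    show ?case using split generate.one by blast
  next
    case (incl h)
    then show ?case using split gen by auto
  next
    case (inv h)
    then obtain k where k: "k < Suc n" "h = x k" by auto
    have "inv h \<in> ?I \<or> inv h \<in> N_last"
    proof (cases "k = n")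
      case True
      then show ?thesis using k subgroup.m_inv_closed[OF subgroup_N_last gen_in_normal_closure[OF lessI]] by simp
    next
      case False
      then show ?thesis using k by (auto intro: generate.inv)
    qed
    then show ?case by (rule split)
  next
    case (eng a b)
    then obtain h1 v1 h2 v2 where hv: "h1 \<in> ?I" "v1 \<in> N_last" "a = h1 \<otimes> v1"
      "h2 \<in> ?I" "v2 \<in> N_last" "b = h2 \<otimes> v2"
      by blast
    then have s: "h2 \<in> span" "h1 \<in> carrier G" "h2 \<in> carrier G" "v1 \<in> carrier G" "v2 \<in> carrier G"
      using generate_init_subset_span N_last_subset_span by auto
    then have "a \<otimes> b = (h1 \<otimes> h2) \<otimes> (gconj G h2 v1 \<otimes> v2)"
      using hv by (simp add: gconj_def m_assoc)
    moreover have "gconj G h2 v1 \<otimes> v2 \<in> N_last"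
      using gconj_normal_closure_closed[OF lessI s(1) hv(2)] hv(5) subgroup.m_closed[OF subgroup_N_last]
      by blast
    moreover have "h1 \<otimes> h2 \<in> ?I" using hv(1,4) by (rule generate.eng)
    ultimately show ?case by blast
  }
qed

lemma N_last_decomp:
  assumes "v \<in> N_last"
  shows "\<exists>a::int. \<exists>\<mu> \<in> level 1. v = x n [^] a \<otimes> \<mu>"
  using assms unfolding normal_closure_def
proof (induct rule: generate.induct)
  have pow: "x n [^] (e::int) \<in> level 0" for e
    unfolding level_0 by (rule subgroup_int_pow_closed[OF subgroup_N_last gen_in_normal_closure[OF lessI]])
  have conj: "\<exists>a::int. \<exists>\<mu> \<in> level 1. gconj G g (x n [^] e) = x n [^] a \<otimes> \<mu>" if g: "g \<in> span" for g and e :: int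
  proof -
    have "gconj G g (x n [^] e) = x n [^] e \<otimes> gcomm G (x n [^] e) g"
      using g by (simp add: gconj_eq_mult_gcomm gen_closed)
    then show ?thesis using gcomm_level_span[OF pow[of e] g] by auto
  qed
  {
    case one
    have "\<one> = x n [^] (0::int) \<otimes> \<one>" by (simp add: gen_closed)
    then show ?case using subgroup.one_closed[OF subgroup_level] by blast
  next
    case (incl h)
    then obtain g where g: "g \<in> span" "h = gconj G g (x n [^] (1::int))" by (auto simp: gen_closed)
    then show ?case using conj[OF g(1), of 1] by simp
  next
    case (inv h)
    then obtain g where g: "g \<in> span" "h = gconj G g (x n)" by auto
    have "x n [^] (-1::int) = inv (x n)" using int_pow_neg[of "x n" 1] by (simp add: gen_closed)
    then have "inv h = gconj G g (x n [^] (-1::int))" using g by (simp add: gconj_inv gen_closed)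
    then show ?case using conj[OF g(1), of "-1"] by simp
  next
    case (eng h1 h2)
    then obtain a b :: int and \<mu>1 \<mu>2 where \<mu>: "\<mu>1 \<in> level 1" "h1 = x n [^] a \<otimes> \<mu>1"
      "\<mu>2 \<in> level 1" "h2 = x n [^] b \<otimes> \<mu>2"
      by blast
    have "\<mu>1 \<otimes> x n [^] b = x n [^] b \<otimes> \<mu>1"
      using \<mu>(1) pow[of b] level_subset_N_last level_0 by (intro normal_closure_commute[OF lessI]) auto
    then have "h1 \<otimes> h2 = x n [^] (a + b) \<otimes> (\<mu>1 \<otimes> \<mu>2)"
      using \<mu> by (simp add: m_assoc[symmetric] int_pow_mult gen_closed) (simp add: m_assoc gen_closed)
    then show ?case using subgroup.m_closed[OF subgroup_level \<mu>(1,3)] by blast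
  }
qed

definition last_comm_prod :: "(nat \<Rightarrow> int) \<Rightarrow> 'a" where
  "last_comm_prod b = oprod G (\<lambda>i. gcomm G (x n) (x i) [^] b i) [0..<n]"

lemma gcomm_last_gen_in_level_1: "i < n \<Longrightarrow> gcomm G (x n) (x i) [^] (c::int) \<in> level 1"
  using gcomm_level_gen_lt[of "x n" 0 i] gen_in_normal_closure[OF lessI] level_0
    subgroup_int_pow_closed[OF subgroup_level]
  by simp

lemma last_comm_prod_in_level_1: "last_comm_prod b \<in> level 1"
  unfolding last_comm_prod_def
  by (intro oprod_in_subgroup[OF subgroup_level] gcomm_last_gen_in_level_1) simp

lemma last_comm_prod_add: "last_comm_prod b \<otimes> last_comm_prod b' = last_comm_prod (\<lambda>i. b i + b' i)"
proof -
  have "last_comm_prod (\<lambda>i. b i + b' i)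
      = oprod G (\<lambda>i. gcomm G (x n) (x i) [^] b i \<otimes> gcomm G (x n) (x i) [^] b' i) [0..<n]"
    unfolding last_comm_prod_def by (intro oprod_cong) (simp add: int_pow_mult gen_closed)
  also have "\<dots> = last_comm_prod b \<otimes> last_comm_prod b'"
    unfolding last_comm_prod_def
    using gcomm_last_gen_in_level_1 level_subset_N_last
    by (intro oprod_mult_distrib_commute[OF subgroup_N_last normal_closure_commute[OF lessI]]) auto
  finally show ?thesis by simp
qed

lemma gcomm_N_last_gen_decomp:
  assumes v: "v \<in> N_last" and k: "k < n"
  shows "\<exists>b. \<exists>r \<in> level 2. gcomm G v (x k) = last_comm_prod b \<otimes> r"
proof -
  obtain a \<mu> where \<mu>: "\<mu> \<in> level 1" "v = x n [^] (a::int) \<otimes> \<mu>" using N_last_decomp[OF v] by blast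
  have xn: "x n [^] a \<in> N_last"
    using subgroup_int_pow_closed[OF subgroup_N_last gen_in_normal_closure[OF lessI]] .
  have xk: "x k \<in> span" using k by (simp add: gen_in_span)
  have "gcomm G v (x k) = gcomm G (x n [^] a) (x k) \<otimes> gcomm G \<mu> (x k)"
    using \<mu> xn xk level_subset_N_last by (auto intro: gcomm_normal_closure_mult[OF lessI])
  also have "gcomm G (x n [^] a) (x k) = gcomm G (x n) (x k) [^] a"
    using gcomm_normal_closure_int_pow[OF lessI gen_in_normal_closure[OF lessI] xk] .
  also have "\<dots> = last_comm_prod (\<lambda>i. if i = k then a else 0)"
    unfolding last_comm_prod_def using k
    by (subst oprod_eq_single[where p = k]) (auto simp: gen_closed)
  finally show ?thesis
    using gcomm_level_gen_lt[OF \<mu>(1) k] by (auto simp: numeral_2_eq_2)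
qed

lemma level_1_decomp:
  assumes "q \<in> level 1"
  shows "\<exists>b. \<exists>r \<in> level 2. q = last_comm_prod b \<otimes> r"
  using assms unfolding level_def[of 1]
proof (induct rule: generate.induct)
  case one
  have "last_comm_prod (\<lambda>_. 0) = \<one>" unfolding last_comm_prod_def by (rule oprod_eq_one) simp
  then have "\<one> = last_comm_prod (\<lambda>_. 0) \<otimes> \<one>" by simp
  then show ?case using subgroup.one_closed[OF subgroup_level] by blast
next
  case (incl h)
  then obtain k where "k < n" "h \<in> (\<lambda>v. gcomm G v (x k)) ` N_last"
    by (auto simp: length_Suc_conv)
  then show ?case using gcomm_N_last_gen_decomp by blast
next
  case (inv h)
  then obtain k v where kv: "k < n" "v \<in> N_last" "h = gcomm G v (x k)"
    by (auto simp: length_Suc_conv)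
  then have "inv h = gcomm G (inv v) (x k)"
    by (simp add: gcomm_normal_closure_inv[OF lessI] gen_in_span)
  then show ?case
    using gcomm_N_last_gen_decomp[OF subgroup.m_inv_closed[OF subgroup_N_last kv(2)] kv(1)] by simp
next
  case (eng h1 h2)
  then obtain b1 b2 r1 r2 where r: "r1 \<in> level 2" "h1 = last_comm_prod b1 \<otimes> r1"
    "r2 \<in> level 2" "h2 = last_comm_prod b2 \<otimes> r2"
    by blast
  have P: "last_comm_prod b1 \<in> carrier G" "last_comm_prod b2 \<in> carrier G"
    using level_mem_carrier[OF last_comm_prod_in_level_1] by auto
  have "r1 \<otimes> last_comm_prod b2 = last_comm_prod b2 \<otimes> r1"
    using r(1) last_comm_prod_in_level_1 level_subset_N_last
    by (intro normal_closure_commute[OF lessI]) auto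
  then have "h1 \<otimes> h2 = (last_comm_prod b1 \<otimes> last_comm_prod b2) \<otimes> (r1 \<otimes> r2)"
    using r P by (simp add: m_assoc[symmetric]) (simp add: m_assoc)
  then show ?case
    using subgroup.m_closed[OF subgroup_level r(1,3)] by (auto simp: last_comm_prod_add)
qed

lemma span_mult_last_gen_pow:
  assumes Y: "Y \<in> span" and \<mu>: "\<mu> \<in> level 1"
  shows "\<exists>b. \<exists>r \<in> level 2. Y \<otimes> x n [^] (a::int) \<otimes> \<mu> = x n [^] a \<otimes> (Y \<otimes> last_comm_prod b) \<otimes> r"
proof -
  let ?T = "x n [^] a"
  have T: "?T \<in> level 0"
    unfolding level_0 by (rule subgroup_int_pow_closed[OF subgroup_N_last gen_in_normal_closure[OF lessI]])
  have "gcomm G Y ?T \<otimes> \<mu> \<in> level 1"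
    using gcomm_span_level[OF T Y] \<mu> subgroup.m_closed[OF subgroup_level] by simp
  then obtain b r where r: "r \<in> level 2" "gcomm G Y ?T \<otimes> \<mu> = last_comm_prod b \<otimes> r"
    using level_1_decomp by blast
  have "Y \<otimes> ?T = ?T \<otimes> Y \<otimes> gcomm G Y ?T"
    using Y T by (intro m_swap_gcomm) auto
  then have "Y \<otimes> ?T \<otimes> \<mu> = ?T \<otimes> Y \<otimes> (gcomm G Y ?T \<otimes> \<mu>)"
    using Y T \<mu> by (simp add: m_assoc)
  also have "\<dots> = ?T \<otimes> (Y \<otimes> last_comm_prod b) \<otimes> r"
    using Y T r level_mem_carrier[OF last_comm_prod_in_level_1] by (simp add: m_assoc)
  finally show ?thesis using r(1) by blast
qed

section \<open>The normal form\<close>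

lemma pow_prod_in_span: "k \<le> Suc n \<Longrightarrow> pow_prod G x \<alpha> k \<in> span"
  unfolding pow_prod_def
  by (intro oprod_in_subgroup[OF span.subgroup_axioms] subgroup_int_pow_closed[OF span.subgroup_axioms])
    (auto simp: gen_in_span)

lemma pow_prod_update_Suc: "pow_prod G x (\<alpha>(n := a)) (Suc n) = pow_prod G x \<alpha> n \<otimes> x n [^] a"
proof -
  have "pow_prod G x (\<alpha>(n := a)) n = pow_prod G x \<alpha> n"
    unfolding pow_prod_def by (rule oprod_cong) simp
  then show ?thesis by (simp add: pow_prod_Suc gen_closed)
qed

lemma comm_prod_in_span: "k \<le> Suc n \<Longrightarrow> comm_prod G x \<beta> k \<in> span"
  unfolding comm_prod_def
  by (intro oprod_in_subgroup[OF span.subgroup_axioms])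
    (auto simp: gen_in_span gcomm_in_span intro!: subgroup_int_pow_closed[OF span.subgroup_axioms])

lemma comm_prod_Suc_lcos:
  "comm_prod G x \<beta> (Suc n) \<in> (comm_prod G x \<beta> n \<otimes> last_comm_prod (\<lambda>i. \<beta> i n)) <# level 2"
proof -
  define f where "f = (\<lambda>(i, j). gcomm G (x j) (x i) [^] \<beta> i j)"
  let ?L = "[(i, j). i \<leftarrow> [0..<Suc n], j \<leftarrow> [i..<Suc n]]" and ?P = "\<lambda>(i, j). j = n"
  have prod: "comm_prod G x \<beta> k = oprod G f [(i, j). i \<leftarrow> [0..<k], j \<leftarrow> [i..<k]]" for k
    unfolding comm_prod_def f_def ..
  have f_span: "f q \<in> span" if "q \<in> set ?L" for q
    using that by (auto simp: f_def gen_in_span gcomm_in_span intro!: subgroup_int_pow_closed[OF span.subgroup_axioms])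
  have f_level: "f (i, n) \<in> level 1" if "i \<le> n" for i
    using that gcomm_last_gen_in_level_1 subgroup.one_closed[OF subgroup_level]
    by (cases "i = n") (auto simp: f_def gen_closed)
  have neg: "(\<lambda>q. \<not> ?P q) = (\<lambda>(i, j). j \<noteq> n)" by auto
  have rest: "filter (\<lambda>q. \<not> ?P q) ?L = [(i, j). i \<leftarrow> [0..<n], j \<leftarrow> [i..<n]]"
    by (subst neg) (rule filter_upper_pairs_neq)
  have "oprod G f (filter ?P ?L) = oprod G (\<lambda>i. f (i, n)) ([0..<n] @ [n])"
    unfolding filter_upper_pairs_eq oprod_map by simp
  also have "\<dots> = oprod G (\<lambda>i. f (i, n)) [0..<n] \<otimes> oprod G (\<lambda>i. f (i, n)) [n]"
    by (rule oprod_append) (auto simp: f_def gen_closed)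
  also have "\<dots> = last_comm_prod (\<lambda>i. \<beta> i n)"
    using oprod_closed[of "[0..<n]" "\<lambda>i. f (i, n)"] by (simp add: f_def last_comm_prod_def gen_closed)
  finally have last: "oprod G f (filter ?P ?L) = last_comm_prod (\<lambda>i. \<beta> i n)" .
  have "oprod G f ?L \<in> (oprod G f (filter (\<lambda>q. \<not> ?P q) ?L) \<otimes> oprod G f (filter ?P ?L)) <# level (Suc 1)"
    by (rule oprod_filter_lcos_level) (use f_span f_level in auto)
  then show ?thesis unfolding rest last prod by (simp add: numeral_2_eq_2)
qed

lemma comm_prod_comm3_last_lcos:
  assumes "C \<in> span"
  shows "comm_prod G x \<beta> n \<otimes> C \<otimes> last_comm_prod b
    \<in> (comm_prod G x (\<lambda>i j. if j = n then b i else \<beta> i j) (Suc n) \<otimes> C) <# level 2"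
proof -
  let ?\<beta> = "\<lambda>i j. if j = n then b i else \<beta> i j"
  have "comm_prod G x ?\<beta> (Suc n) \<in> (comm_prod G x ?\<beta> n \<otimes> last_comm_prod (\<lambda>i. ?\<beta> i n)) <# level 2"
    by (rule comm_prod_Suc_lcos)
  moreover have "comm_prod G x ?\<beta> n = comm_prod G x \<beta> n"
    unfolding comm_prod_def by (rule oprod_cong) auto
  ultimately have "comm_prod G x ?\<beta> (Suc n) \<in> (comm_prod G x \<beta> n \<otimes> last_comm_prod b) <# level 2"
    by (simp only: simp_thms(6) if_True)
  then have B: "comm_prod G x \<beta> n \<otimes> last_comm_prod b \<in> comm_prod G x ?\<beta> (Suc n) <# level 2"
    by (rule lcos_level_sym) (simp add: comm_prod_in_span level_mem_carrier[OF last_comm_prod_in_level_1])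
  have P: "last_comm_prod b \<in> level 1" by (rule last_comm_prod_in_level_1)
  have "C \<otimes> last_comm_prod b \<in> (last_comm_prod b \<otimes> C) <# level 2"
    using span_mult_level_lcos[OF P assms] by (simp add: numeral_2_eq_2)
  have c: "comm_prod G x \<beta> n \<in> carrier G" "last_comm_prod b \<in> carrier G" "C \<in> carrier G"
    using comm_prod_in_span P assms by auto
  then have "comm_prod G x \<beta> n \<otimes> (C \<otimes> last_comm_prod b)
      \<in> (comm_prod G x \<beta> n \<otimes> (last_comm_prod b \<otimes> C)) <# level 2"
    using \<open>C \<otimes> last_comm_prod b \<in> (last_comm_prod b \<otimes> C) <# level 2\<close>
    by (intro lcos_level_mult_left) auto
  then have "comm_prod G x \<beta> n \<otimes> C \<otimes> last_comm_prod b
      \<in> (comm_prod G x \<beta> n \<otimes> last_comm_prod b \<otimes> C) <# level 2"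
    using c by (simp add: m_assoc)
  moreover have "comm_prod G x \<beta> n \<otimes> last_comm_prod b \<otimes> C \<in> (comm_prod G x ?\<beta> (Suc n) \<otimes> C) <# level 2"
    using B assms comm_prod_in_span by (intro lcos_level_mult lcos_level_refl) auto
  ultimately show ?thesis by (rule lcos_level_trans) (use assms comm_prod_in_span in auto)
qed

lemma comm_prod_comm3_prod_last_mult:
  assumes \<omega>: "\<And>i j. \<omega> i j \<in> span" and r: "r \<in> level 2"
  shows "\<exists>\<omega>'. (\<forall>i j. \<omega>' i j \<in> span) \<and>
    comm_prod G x \<beta> n \<otimes> comm3_prod G x \<omega> (Suc n) \<otimes> last_comm_prod b \<otimes> r
      = comm_prod G x (\<lambda>i j. if j = n then b i else \<beta> i j) (Suc n) \<otimes> comm3_prod G x \<omega>' (Suc n)"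
proof -
  let ?C = "comm3_prod G x \<omega> (Suc n)" and ?B = "comm_prod G x (\<lambda>i j. if j = n then b i else \<beta> i j) (Suc n)"
  have C: "?C \<in> span" using \<omega> by (rule comm3_prod_in_span)
  obtain e where e: "e \<in> level 2" "comm_prod G x \<beta> n \<otimes> ?C \<otimes> last_comm_prod b = ?B \<otimes> ?C \<otimes> e"
    using comm_prod_comm3_last_lcos[OF C, of \<beta> b] unfolding lcos_level_iff by blast
  obtain \<omega>' where \<omega>': "\<forall>i j. \<omega>' i j \<in> span" "?C \<otimes> (e \<otimes> r) = comm3_prod G x \<omega>' (Suc n)"
    using comm3_prod_mult_level[of \<omega> "e \<otimes> r" 0] \<omega> subgroup.m_closed[OF subgroup_level e(1) r]
    unfolding numeral_2_eq_2 by blast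
  have "?B \<otimes> ?C \<otimes> e \<otimes> r = ?B \<otimes> (?C \<otimes> (e \<otimes> r))"
    using C e(1) r comm_prod_in_span by (simp add: m_assoc)
  then show ?thesis using e(2) \<omega>' by auto
qed

lemma has_normal_form_Suc:
  assumes IH: "\<And>h. h \<in> generate G (x ` {..<n}) \<Longrightarrow> has_normal_form G x n h" and z: "z \<in> span"
  shows "has_normal_form G x (Suc n) z"
proof -
  obtain h v where hv: "h \<in> generate G (x ` {..<n})" "v \<in> N_last" "z = h \<otimes> v"
    using span_decomp[OF z] by blast
  obtain a \<mu> where \<mu>: "\<mu> \<in> level 1" "v = x n [^] (a::int) \<otimes> \<mu>"
    using N_last_decomp[OF hv(2)] by blast
  obtain \<alpha> \<beta> \<omega> where \<omega>: "\<forall>i j. \<omega> i j \<in> generate G (x ` {..<n})"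
    and h: "h = pow_prod G x \<alpha> n \<otimes> (comm_prod G x \<beta> n \<otimes> comm3_prod G x \<omega> n)"
    using IH[OF hv(1)] unfolding has_normal_form_def by blast
  define \<omega>' where "\<omega>' = (\<lambda>i j. if i < n - 1 \<and> j < n - 1 then \<omega> i j else \<one>)"
  define Y where "Y = comm_prod G x \<beta> n \<otimes> comm3_prod G x \<omega>' (Suc n)"
  have \<omega>_span: "\<And>i j. \<omega> i j \<in> span"
    using \<omega> generate_init_subset_span by blast
  then have \<omega>'_span: "\<And>i j. \<omega>' i j \<in> span" by (simp add: \<omega>'_def)
  have A: "pow_prod G x \<alpha> n \<in> span" by (simp add: pow_prod_in_span)
  have Y: "Y \<in> span" unfolding Y_def using comm3_prod_in_span[OF \<omega>'_span] by (simp add: comm_prod_in_span)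
  obtain b r where r: "r \<in> level 2"
    "Y \<otimes> x n [^] a \<otimes> \<mu> = x n [^] a \<otimes> (Y \<otimes> last_comm_prod b) \<otimes> r"
    using span_mult_last_gen_pow[OF Y \<mu>(1)] by blast
  obtain \<omega>'' where \<omega>'': "\<forall>i j. \<omega>'' i j \<in> span"
    "Y \<otimes> last_comm_prod b \<otimes> r
      = comm_prod G x (\<lambda>i j. if j = n then b i else \<beta> i j) (Suc n) \<otimes> comm3_prod G x \<omega>'' (Suc n)"
    using comm_prod_comm3_prod_last_mult[of \<omega>' r \<beta> b] \<omega>'_span r(1) unfolding Y_def by blast
  have "comm3_prod G x \<omega> n = comm3_prod G x \<omega>' (Suc n)"
    unfolding \<omega>'_def using \<omega>_span by (intro comm3_prod_pad) simp
  then have "z = pow_prod G x \<alpha> n \<otimes> (Y \<otimes> x n [^] a \<otimes> \<mu>)"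
    using hv(3) \<mu> h A Y by (simp add: Y_def m_assoc gen_closed comm_prod_in_span comm3_prod_in_span[OF \<omega>'_span])
  also have "\<dots> = pow_prod G x (\<alpha>(n := a)) (Suc n) \<otimes> (Y \<otimes> last_comm_prod b \<otimes> r)"
    using r A Y level_mem_carrier[OF last_comm_prod_in_level_1]
    by (simp add: pow_prod_update_Suc m_assoc gen_closed)
  finally show ?thesis using \<omega>'' unfolding has_normal_form_def span_def by auto
qed

end

lemma rf_generators_Suc_imp: "rf_generators G x (Suc n) \<Longrightarrow> rf_generators G x n"
  by (simp add: rf_generators_def rf_generators_axioms_def)

lemma rf_generators_has_normal_form:
  assumes "rf_generators G x m" "z \<in> generate G (x ` {..<m})"
  shows "has_normal_form G x m z"
  using assms
proof (induct m arbitrary: z)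
  case 0
  then interpret group G by (simp add: rf_generators_def)
  have "z = \<one>\<^bsub>G\<^esub>" using 0(2) generate_empty by simp
  then have "z = pow_prod G x (\<lambda>_. 0) 0 \<otimes>\<^bsub>G\<^esub>
      (comm_prod G x (\<lambda>_ _. 0) 0 \<otimes>\<^bsub>G\<^esub> comm3_prod G x (\<lambda>_ _. \<one>\<^bsub>G\<^esub>) 0)"
    by (simp add: pow_prod_def comm_prod_def comm3_prod_def)
  moreover have "\<one>\<^bsub>G\<^esub> \<in> generate G (x ` {..<0})" by (rule generate.one)
  ultimately show ?case unfolding has_normal_form_def
    by (intro exI[of _ "\<lambda>_. 0"] exI[of _ "\<lambda>_ _. 0"] exI[of _ "\<lambda>_ _. \<one>\<^bsub>G\<^esub>"]) simp
next
  case (Suc n)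
  interpret rf_generators_succ G x n using Suc(2) by (simp add: rf_generators_succ_def)
  show ?case
    using has_normal_form_Suc Suc(1)[OF rf_generators_Suc_imp[OF Suc(2)]] Suc(3) by (simp add: span_def)
qed

theorem theorem5p1:
  fixes m :: nat and z :: "letter list set"
  assumes "z \<in> carrier (RF m)"
  shows "\<exists>(\<alpha> :: nat \<Rightarrow> int) (\<beta> :: nat \<Rightarrow> nat \<Rightarrow> int) \<omega>.
           (\<forall>i j. \<omega> i j \<in> carrier (RF m)) \<and>
           z = oprod (RF m) (\<lambda>i. rf_gen m i [^]\<^bsub>RF m\<^esub> \<alpha> i) [0..<m]
               \<otimes>\<^bsub>RF m\<^esub>
               (oprod (RF m) (\<lambda>(i, j). gcomm (RF m) (rf_gen m j) (rf_gen m i) [^]\<^bsub>RF m\<^esub> \<beta> i j)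
                  [(i, j). i \<leftarrow> [0..<m], j \<leftarrow> [i..<m]]
               \<otimes>\<^bsub>RF m\<^esub>
                oprod (RF m) (\<lambda>(i, j). gcomm (RF m) (gcomm (RF m) (\<omega> i j) (rf_gen m i)) (rf_gen m j))
                  [(i, j). i \<leftarrow> [0..<m - 1], j \<leftarrow> [0..<m - 1]])"
proof -
  have "rf_generators (RF m) (rf_gen m) m"
    by (intro rf_generators.intro group_RF rf_generators_axioms.intro rf_gen_in_carrier rf_gen_commutes_gconj)
  then have "has_normal_form (RF m) (rf_gen m) m z"
    using assms RF_carrier_eq_generate by (intro rf_generators_has_normal_form) auto
  then show ?thesis
    unfolding has_normal_form_def pow_prod_def comm_prod_def comm3_prod_def RF_carrier_eq_generate[symmetric] .
qed

end
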